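(* Let $\xi_1,\xi_2,\ldots$ be i.i.d.\ nonnegative real random variables with $\overline F(x):=\P(\xi_1\geq x)=x^{-1}\ell(x)$ for $x\to\infty$, where $\ell$ is slowly varying. Let $G(x):=\int_0^x\overline F(t)\,dt$, $S_n:=\sum_{i=1}^n\xi_i$, $M_n:=\max\{\xi_1,\ldots,\xi_n\}$. Let $(x_n)_{n\geq1}$ be a positive sequence with $\liminf_{n\to\infty}\frac{x_n}{nG(x_n)}>0$ and let $(a_n)_{n\geq1}$ be a positive sequence with $\lim_{n\to\infty}a_n=:a\in(0,\infty)$. Then, as $n\to\infty$, $$\P(S_n-nG(x_n)\geq a_nx_n)\sim \P(S_n-nG(x_n)\geq a_nx_n,\ M_n\geq a_nx_n)\sim \P(M_n\geq a_nx_n)\sim a^{-1}n\overline F(x_n)=o(1).$$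
   Context: A function $\ell$ is slowly varying if $\ell(\lambda x)/\ell(x)\to1$ as $x\to\infty$ for every $\lambda>0$. For sequences, $u_n\sim v_n$ means $u_n/v_n\to1$ as $n\to\infty$. *)

theory Defs
  imports "HOL-Probability.Probability" "HOL-Library.Landau_Symbols"
begin

definition slowly_varying :: "(real \<Rightarrow> real) \<Rightarrow> bool" where
  "slowly_varying l \<longleftrightarrow> (\<forall>c>0. ((\<lambda>x. l (c * x) / l x) \<longlongrightarrow> 1) at_top)"

end

theory Submission
  imports Defs
begin

(* Write y = a_n x_n. By inclusion-exclusion, P(M_n >= y) = n Fbar(y) + O((n Fbar(y))^2), and
   regular variation of Fbar with index -1 gives n Fbar(y) ~ n Fbar(x_n) / a. Moreover
   x Fbar(x) = o(G(x)), which together with x_n >= c n G(x_n) yields n Fbar(x_n) -> 0.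

   It remains to show that {S_n - n G(x_n) >= y} and {M_n >= y} differ by o(n Fbar(x_n)).
   If M_n >= y but the sum is small, then either the big summand lies in [y, (1+d) y), or the
   other summands, truncated at x_n, fall d y / 2 below their mean. If the sum is large but
   M_n < y, then two summands exceed e y, or one lies in [(1-d) y, y), or the summands
   truncated at e y exceed their mean by d y or by y. Independence and Chebyshev's inequality
   bound the deviations of truncated sums, since regular variation makes the truncated second
   moment E min(xi, w)^2 of order w^2 Fbar(w). Letting d, e -> 0 makes all error terms
   o(n Fbar(x_n)). *)

lemma min_square_le_dyadic_sum:
  fixes v w :: real
  assumes "v \<ge> 0" "w \<ge> 0"
  shows "(min v w)^2 \<le> (\<Sum>j<J. (w/2^j)^2 * (if v \<ge> w/2^(j+1) then 1 else 0)) + (w/2^J)^2"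
proof (induction J)
  case 0
  then show ?case using assms by (simp add: min_def power_mono)
next
  case (Suc J)
  show ?case
  proof (cases "v \<ge> w/2^(J+1)")
    case True
    show ?thesis using Suc.IH True by (simp, smt (verit) zero_le_power2)
  next
    case False
    have "(min v w)^2 \<le> v^2" using assms by (simp add: min_def power_mono)
    also have "\<dots> \<le> (w/2^(Suc J))^2" using False assms by (intro power_mono) auto
    also have "\<dots> \<le> (\<Sum>j<Suc J. (w/2^j)^2 * (if v \<ge> w/2^(j+1) then 1 else 0)) + (w/2^(Suc J))^2"
      by (intro add_increasing order.refl sum_nonneg) auto
    finally show ?thesis .
  qed
qed

lemma dyadic_sum_le_min:
  fixes v x :: real
  assumes "v \<ge> 0" "x \<ge> 0"
  shows "(\<Sum>j<K. (x/2^(j+1)) * (if v \<ge> x/2^j then 1 else 0)) \<le> min v x"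
proof -
  have "(\<Sum>j<K. (x/2^(j+1)) * (if v \<ge> x/2^j then 1 else 0))
     \<le> (if v < x/2^K then 0 else min v x - x/2^K)" for K
  proof (induction K)
    case 0
    then show ?case using assms by auto
  next
    case (Suc K)
    have "x/2^Suc K \<le> x/2^K" "x/2^K \<le> x/1"
      using assms by (intro divide_left_mono; simp)+
    then show ?case
      using Suc by (cases "v \<ge> x/2^K") auto
  qed
  moreover have "0 \<le> x/2^K"
    using assms by simp
  ultimately show ?thesis
    using assms by (smt (verit))
qed

lemma tendsto_zero_if_eventually_less:
  fixes f :: "'b \<Rightarrow> real"
  assumes "\<forall>\<^sub>F n in F. 0 \<le> f n" and "\<And>\<epsilon>. \<epsilon> > 0 \<Longrightarrow> \<forall>\<^sub>F n in F. f n < \<epsilon>"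
  shows "(f \<longlongrightarrow> 0) F"
proof (rule order_tendstoI)
  show "\<forall>\<^sub>F n in F. e < f n" if "e < 0" for e
    using assms(1) by eventually_elim (use that in auto)
qed (fact assms(2))

lemma liminf_pos_imp_eventually_ge:
  fixes f :: "nat \<Rightarrow> real"
  assumes "liminf (\<lambda>n. ereal (f n)) > 0"
  obtains c where "c > 0" "\<forall>\<^sub>F n in sequentially. c \<le> f n"
proof -
  obtain z where z: "0 < z" "z < liminf (\<lambda>n. ereal (f n))"
    using assms dense by blast
  then obtain c where "z = ereal c"
    by (cases z) auto
  with z show ?thesis
    using less_LiminfD[OF z(2)] by (intro that[of c]) (auto elim: eventually_mono)
qed

lemma slowly_varying_tail_ratio:
  assumes "slowly_varying l" and tail: "\<forall>\<^sub>F t in at_top. F t = l t / t" and "c > 0"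
  shows "((\<lambda>t. F (c*t) / F t) \<longlongrightarrow> 1/c) at_top"
proof -
  have "((\<lambda>t. l (c*t) / l t / c) \<longlongrightarrow> 1/c) at_top"
    using assms unfolding slowly_varying_def by (intro tendsto_divide tendsto_const) auto
  moreover have "\<forall>\<^sub>F t in at_top. l (c*t) / l t / c = F (c*t) / F t"
  proof -
    have "\<forall>\<^sub>F t in at_top. F (c*t) = l (c*t) / (c*t)"
      using tail filterlim_tendsto_pos_mult_at_top[OF tendsto_const \<open>c > 0\<close> filterlim_ident]
      by (rule eventually_compose_filterlim)
    with tail eventually_gt_at_top[of 0] show ?thesis
    proof eventually_elim
      case (elim t)
      then have "l t = t * F t" "l (c*t) = c * t * F (c*t)"
        using \<open>c > 0\<close> by auto
      then show ?case using \<open>c > 0\<close> \<open>t > 0\<close> by (cases "F t = 0") (simp_all add: field_simps)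
    qed
  qed
  ultimately show ?thesis by (rule Lim_transform_eventually)
qed

lemma abs_sum_le_card_mult:
  fixes f :: "'i \<Rightarrow> real"
  assumes "\<And>j. j \<in> J \<Longrightarrow> \<bar>f j\<bar> \<le> B"
  shows "\<bar>\<Sum>j\<in>J. f j\<bar> \<le> real (card J) * B"
  using sum_bounded_above[of J "\<lambda>j. \<bar>f j\<bar>" B] assms by (intro order_trans[OF sum_abs]) simp

lemma (in finite_measure) integrable_square_if_bounded:
  fixes f :: "'a \<Rightarrow> real"
  assumes "f \<in> borel_measurable M" and "\<And>\<omega>. \<omega> \<in> space M \<Longrightarrow> \<bar>f \<omega>\<bar> \<le> B"
  shows "integrable M (\<lambda>\<omega>. (f \<omega>)^2)"
proof (rule integrable_const_bound[where B="B^2"])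
  have "(f \<omega>)^2 \<le> B^2" if "\<omega> \<in> space M" for \<omega>
    using assms(2)[OF that] by (metis abs_ge_zero abs_le_square_iff abs_of_nonneg order_trans)
  then show "AE \<omega> in M. norm ((f \<omega>)^2) \<le> B^2"
    by (auto intro!: AE_I2)
qed (use assms(1) in simp)

lemma (in prob_space) expectation_square_sum_indep_centered:
  fixes Z :: "'i \<Rightarrow> 'a \<Rightarrow> real"
  assumes "finite J" and indep: "indep_vars (\<lambda>_. borel) Z J"
    and centered: "\<And>j. j \<in> J \<Longrightarrow> expectation (Z j) = 0"
    and bounded: "\<And>j \<omega>. j \<in> J \<Longrightarrow> \<omega> \<in> space M \<Longrightarrow> \<bar>Z j \<omega>\<bar> \<le> B"
  shows "expectation (\<lambda>\<omega>. (\<Sum>j\<in>J. Z j \<omega>)^2) = (\<Sum>j\<in>J. expectation (\<lambda>\<omega>. (Z j \<omega>)^2))"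
  using assms
proof (induction J rule: finite_induct)
  case empty
  then show ?case by simp
next
  case (insert i J)
  define S where "S \<omega> = (\<Sum>j\<in>J. Z j \<omega>)" for \<omega>
  have [measurable]: "Z j \<in> borel_measurable M" if "j \<in> insert i J" for j
    using insert.prems(1) that by (auto simp: indep_vars_def)
  have S_bound: "\<bar>S \<omega>\<bar> \<le> real (card J) * B" if "\<omega> \<in> space M" for \<omega>
    unfolding S_def using insert.prems(3) that by (intro abs_sum_le_card_mult) auto
  have Zi_bound: "\<bar>Z i \<omega>\<bar> \<le> B" if "\<omega> \<in> space M" for \<omega>
    using insert.prems(3) that by simp
  have S_meas: "S \<in> borel_measurable M"
    unfolding S_def by (intro borel_measurable_sum) simp
  have int_S: "integrable M S" "integrable M (\<lambda>\<omega>. (S \<omega>)^2)"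
    using S_bound S_meas
    by (auto intro!: integrable_const_bound[where B="real (card J) * B"] integrable_square_if_bounded)
  have int_Zi: "integrable M (Z i)" "integrable M (\<lambda>\<omega>. (Z i \<omega>)^2)"
    using Zi_bound by (auto intro!: integrable_const_bound[where B=B] integrable_square_if_bounded)
  have int_ZiS: "integrable M (\<lambda>\<omega>. Z i \<omega> * S \<omega>)"
    using Zi_bound S_bound S_meas
    by (intro integrable_const_bound[where B="B * (real (card J) * B)"])
       (auto simp: abs_mult intro!: AE_I2 mult_mono order_trans[OF abs_ge_zero Zi_bound])
  have "indep_var borel (Z i) borel S"
    unfolding S_def using insert by (intro indep_vars_sum) auto
  then have "expectation (\<lambda>\<omega>. Z i \<omega> * S \<omega>) = expectation (Z i) * expectation S"
    using int_Zi int_S by (intro indep_var_lebesgue_integral)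
  also have "\<dots> = 0"
    using insert.prems(2) by simp
  finally have cross: "expectation (\<lambda>\<omega>. Z i \<omega> * S \<omega>) = 0" .
  have "(\<lambda>\<omega>. (\<Sum>j\<in>insert i J. Z j \<omega>)^2) = (\<lambda>\<omega>. (Z i \<omega>)^2 + 2 * (Z i \<omega> * S \<omega>) + (S \<omega>)^2)"
    using insert.hyps by (auto simp: S_def power2_eq_square algebra_simps)
  then have "expectation (\<lambda>\<omega>. (\<Sum>j\<in>insert i J. Z j \<omega>)^2)
      = expectation (\<lambda>\<omega>. (Z i \<omega>)^2) + expectation (\<lambda>\<omega>. (S \<omega>)^2)"
    using int_Zi int_S int_ZiS cross by simp
  moreover have "expectation (\<lambda>\<omega>. (S \<omega>)^2) = (\<Sum>j\<in>J. expectation (\<lambda>\<omega>. (Z j \<omega>)^2))"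
    unfolding S_def using insert.prems by (intro insert.IH) (auto intro: indep_vars_subset)
  ultimately show ?case
    using insert.hyps by simp
qed

section \<open>Nonnegative i.i.d. summands\<close>

locale iid_nonneg = prob_space M for M :: "'a measure" +
  fixes \<xi> :: "nat \<Rightarrow> 'a \<Rightarrow> real"
  assumes measurable_\<xi>[measurable]: "\<And>i. \<xi> i \<in> borel_measurable M"
    and indep: "indep_vars (\<lambda>_. borel) \<xi> {1..}"
    and ident: "\<And>i. i \<ge> 1 \<Longrightarrow> distr M borel (\<xi> i) = distr M borel (\<xi> 1)"
    and nonneg: "\<And>i \<omega>. i \<ge> 1 \<Longrightarrow> \<omega> \<in> space M \<Longrightarrow> \<xi> i \<omega> \<ge> 0"
begin

definition Fbar :: "real \<Rightarrow> real" where
  "Fbar t = prob {\<omega> \<in> space M. \<xi> 1 \<omega> \<ge> t}"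

definition G :: "real \<Rightarrow> real" where
  "G s = (LBINT t=0..s. Fbar t)"

definition trunc_moment2 :: "real \<Rightarrow> real" where
  "trunc_moment2 w = expectation (\<lambda>\<omega>. (min (\<xi> 1 \<omega>) w)^2)"

lemma prob_\<xi>_in_eq:
  assumes "i \<ge> 1" "B \<in> sets borel"
  shows "prob {\<omega> \<in> space M. \<xi> i \<omega> \<in> B} = prob {\<omega> \<in> space M. \<xi> 1 \<omega> \<in> B}"
proof -
  have "measure (distr M borel (\<xi> i)) B = measure (distr M borel (\<xi> 1)) B"
    using ident[OF assms(1)] by simp
  moreover have "{\<omega> \<in> space M. \<xi> j \<omega> \<in> B} = \<xi> j -` B \<inter> space M" for j
    by auto
  ultimately show ?thesis
    using assms by (simp add: measure_distr)
qed

lemma prob_\<xi>_ge: "i \<ge> 1 \<Longrightarrow> prob {\<omega> \<in> space M. \<xi> i \<omega> \<ge> t} = Fbar t"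
  using prob_\<xi>_in_eq[of i "{t..}"] by (simp add: Fbar_def)

lemma expectation_\<xi>_eq:
  fixes f :: "real \<Rightarrow> real"
  assumes "i \<ge> 1" "f \<in> borel_measurable borel"
  shows "expectation (\<lambda>\<omega>. f (\<xi> i \<omega>)) = expectation (\<lambda>\<omega>. f (\<xi> 1 \<omega>))"
  using ident[OF assms(1)] integral_distr[OF measurable_\<xi> assms(2)] by metis

lemma Fbar_antimono: "s \<le> t \<Longrightarrow> Fbar t \<le> Fbar s"
  unfolding Fbar_def by (intro finite_measure_mono) auto

lemma Fbar_nonneg: "Fbar t \<ge> 0"
  by (simp add: Fbar_def)

lemma borel_measurable_Fbar[measurable]: "Fbar \<in> borel_measurable borel"
proof -
  have "mono (\<lambda>t. - Fbar t)"
    by (auto simp: mono_def intro: Fbar_antimono)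
  then have "(\<lambda>t. - (- Fbar t)) \<in> borel_measurable borel"
    by (intro borel_measurable_uminus borel_measurable_mono)
  then show ?thesis by simp
qed

lemma prob_\<xi>_and_sum_eq:
  fixes f :: "real \<Rightarrow> real"
  assumes J: "finite J" "J \<subseteq> {1..}" and i: "i \<ge> 1" "i \<notin> J"
    and [measurable]: "A \<in> sets borel" "B \<in> sets borel" "f \<in> borel_measurable borel"
  shows "prob {\<omega>\<in>space M. \<xi> i \<omega> \<in> A \<and> (\<Sum>j\<in>J. f (\<xi> j \<omega>)) \<in> B}
       = prob {\<omega>\<in>space M. \<xi> i \<omega> \<in> A} * prob {\<omega>\<in>space M. (\<Sum>j\<in>J. f (\<xi> j \<omega>)) \<in> B}"
proof -
  define g where "g j = (if j = i then (\<lambda>v. v) else f)" for j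
  have "indep_vars (\<lambda>_. borel) \<xi> (insert i J)"
    using indep_vars_subset[OF indep] J i by auto
  then have "indep_vars (\<lambda>_. borel) (\<lambda>j \<omega>. g j (\<xi> j \<omega>)) (insert i J)"
    by (rule indep_vars_compose2) (auto simp: g_def)
  then have "indep_var borel (\<lambda>\<omega>. g i (\<xi> i \<omega>)) borel (\<lambda>\<omega>. \<Sum>j\<in>J. g j (\<xi> j \<omega>))"
    using J i by (intro indep_vars_sum) auto
  moreover have "(\<lambda>\<omega>. \<Sum>j\<in>J. g j (\<xi> j \<omega>)) = (\<lambda>\<omega>. \<Sum>j\<in>J. f (\<xi> j \<omega>))"
    using i by (auto simp: g_def intro!: ext sum.cong)
  ultimately have "indep_var borel (\<xi> i) borel (\<lambda>\<omega>. \<Sum>j\<in>J. f (\<xi> j \<omega>))"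
    by (simp add: g_def)
  from indep_varD[OF this, of A B] show ?thesis
    by (simp add: vimage_def Int_def conj_commute)
qed

lemma nn_integral_min_\<xi>:
  assumes w: "w \<ge> 0"
  shows "(\<integral>\<^sup>+\<omega>. ennreal (min (\<xi> 1 \<omega>) w) \<partial>M) = (\<integral>\<^sup>+t. ennreal (indicator {0<..<w} t * Fbar t) \<partial>lborel)"
proof -
  interpret pair_sigma_finite M lborel ..
  define f where "f \<omega> t = ennreal (indicator {0<..<w} t * (if t \<le> \<xi> 1 \<omega> then 1 else 0))" for \<omega> t
  have "case_prod f \<in> borel_measurable (M \<Otimes>\<^sub>M lborel)"
    unfolding f_def by measurable
  then have "(\<integral>\<^sup>+\<omega>. (\<integral>\<^sup>+t. f \<omega> t \<partial>lborel) \<partial>M) = (\<integral>\<^sup>+t. (\<integral>\<^sup>+\<omega>. f \<omega> t \<partial>M) \<partial>lborel)"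
    by (simp add: Fubini')
  moreover have "(\<integral>\<^sup>+t. f \<omega> t \<partial>lborel) = ennreal (min (\<xi> 1 \<omega>) w)" if "\<omega> \<in> space M" for \<omega>
  proof -
    have "(\<integral>\<^sup>+t. f \<omega> t \<partial>lborel) = (\<integral>\<^sup>+t. indicator ({0<..<w} \<inter> {..\<xi> 1 \<omega>}) t \<partial>lborel)"
      unfolding f_def by (intro nn_integral_cong) (auto simp: indicator_def)
    also have "\<dots> = emeasure lborel ({0<..<w} \<inter> {..\<xi> 1 \<omega>})"
      by simp
    also have "{0<..<w} \<inter> {..\<xi> 1 \<omega>} = (if \<xi> 1 \<omega> < w then {0<..\<xi> 1 \<omega>} else {0<..<w})"
      by auto
    finally show ?thesis
      using nonneg[OF _ that] w by simp
  qed
  moreover have "(\<integral>\<^sup>+\<omega>. f \<omega> t \<partial>M) = ennreal (indicator {0<..<w} t * Fbar t)" for t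
  proof -
    have "(\<integral>\<^sup>+\<omega>. f \<omega> t \<partial>M) = (\<integral>\<^sup>+\<omega>. indicator {0<..<w} t * indicator {\<omega>\<in>space M. t \<le> \<xi> 1 \<omega>} \<omega> \<partial>M)"
      unfolding f_def by (intro nn_integral_cong) (auto simp: indicator_def)
    also have "\<dots> = indicator {0<..<w} t * emeasure M {\<omega>\<in>space M. t \<le> \<xi> 1 \<omega>}"
      by (subst nn_integral_cmult) auto
    finally show ?thesis
      by (simp add: Fbar_def emeasure_eq_measure indicator_def)
  qed
  ultimately show ?thesis
    by (simp cong: nn_integral_cong)
qed

lemma G_eq_expectation_min:
  assumes w: "w \<ge> 0"
  shows "G w = expectation (\<lambda>\<omega>. min (\<xi> 1 \<omega>) w)"
proof -
  have "G w = (LINT t|lborel. indicator {0<..<w} t * Fbar t)"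
    unfolding G_def using w
    by (simp add: interval_lebesgue_integral_le_eq zero_ereal_def set_lebesgue_integral_def)
  also have "\<dots> = enn2real (\<integral>\<^sup>+t. ennreal (indicator {0<..<w} t * Fbar t) \<partial>lborel)"
    by (intro integral_eq_nn_integral) (auto simp: Fbar_nonneg)
  also have "\<dots> = enn2real (\<integral>\<^sup>+\<omega>. ennreal (min (\<xi> 1 \<omega>) w) \<partial>M)"
    using nn_integral_min_\<xi>[OF w] by simp
  also have "\<dots> = expectation (\<lambda>\<omega>. min (\<xi> 1 \<omega>) w)"
    using nonneg w by (intro integral_eq_nn_integral[symmetric]) auto
  finally show ?thesis .
qed

lemma min_\<xi>_bounded:
  assumes "j \<ge> 1" "\<omega> \<in> space M" "w \<ge> 0"
  shows "\<bar>min (\<xi> j \<omega>) w\<bar> \<le> w"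
  using nonneg[OF assms(1,2)] assms(3) by auto

lemma integrable_min_\<xi>:
  assumes "j \<ge> 1" "w \<ge> 0"
  shows "integrable M (\<lambda>\<omega>. min (\<xi> j \<omega>) w)" "integrable M (\<lambda>\<omega>. (min (\<xi> j \<omega>) w)^2)"
  using min_\<xi>_bounded[OF assms(1) _ assms(2)]
  by (auto intro!: integrable_const_bound[where B=w] integrable_square_if_bounded)

lemma expectation_min_\<xi>:
  assumes "j \<ge> 1" "w \<ge> 0"
  shows "expectation (\<lambda>\<omega>. min (\<xi> j \<omega>) w) = G w"
  using expectation_\<xi>_eq[OF assms(1), of "\<lambda>v. min v w"] G_eq_expectation_min[OF assms(2)] by simp

lemma G_nonneg: "w \<ge> 0 \<Longrightarrow> G w \<ge> 0"
  using G_eq_expectation_min[of w] by (auto intro!: integral_nonneg_AE simp: nonneg)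

lemma G_mono: "0 \<le> v \<Longrightarrow> v \<le> w \<Longrightarrow> G v \<le> G w"
  using G_eq_expectation_min[of v] G_eq_expectation_min[of w] integrable_min_\<xi>[of 1]
  by (auto intro!: integral_mono)

lemma trunc_moment2_nonneg: "trunc_moment2 w \<ge> 0"
  by (simp add: trunc_moment2_def)

lemma variance_min_\<xi>_le:
  assumes "j \<ge> 1" "w \<ge> 0"
  shows "variance (\<lambda>\<omega>. min (\<xi> j \<omega>) w) \<le> trunc_moment2 w"
proof -
  have "variance (\<lambda>\<omega>. min (\<xi> j \<omega>) w)
      = expectation (\<lambda>\<omega>. (min (\<xi> j \<omega>) w)^2) - (expectation (\<lambda>\<omega>. min (\<xi> j \<omega>) w))^2"
    using integrable_min_\<xi>[OF assms] by (intro variance_eq)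
  also have "\<dots> \<le> expectation (\<lambda>\<omega>. (min (\<xi> j \<omega>) w)^2)"
    by simp
  also have "\<dots> = trunc_moment2 w"
    unfolding trunc_moment2_def using expectation_\<xi>_eq[OF assms(1), of "\<lambda>v. (min v w)^2"] by simp
  finally show ?thesis .
qed

lemma prob_trunc_sum_deviation_le:
  assumes J: "finite J" "J \<subseteq> {1..}" and w: "w \<ge> 0" and s: "s > 0"
  shows "prob {\<omega>\<in>space M. s \<le> \<bar>(\<Sum>j\<in>J. min (\<xi> j \<omega>) w) - real (card J) * G w\<bar>}
     \<le> real (card J) * trunc_moment2 w / s^2"
proof -
  define T where "T \<omega> = (\<Sum>j\<in>J. min (\<xi> j \<omega>) w)" for \<omega>
  define Z where "Z j \<omega> = min (\<xi> j \<omega>) w - G w" for j \<omega>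
  have J1: "j \<ge> 1" if "j \<in> J" for j
    using J that by auto
  have T_mean: "expectation T = real (card J) * G w"
    unfolding T_def using J1 integrable_min_\<xi> expectation_min_\<xi> w by (simp add: Bochner_Integration.integral_sum)
  have "T \<omega> - expectation T = (\<Sum>j\<in>J. Z j \<omega>)" for \<omega>
    unfolding T_mean T_def Z_def by (simp add: sum_subtractf)
  then have "variance T = expectation (\<lambda>\<omega>. (\<Sum>j\<in>J. Z j \<omega>)^2)"
    by simp
  also have "\<dots> = (\<Sum>j\<in>J. expectation (\<lambda>\<omega>. (Z j \<omega>)^2))"
  proof (rule expectation_square_sum_indep_centered[where B="w + G w"])
    have "indep_vars (\<lambda>_. borel) \<xi> J"
      using indep_vars_subset[OF indep J(2)] .
    then show "indep_vars (\<lambda>_. borel) Z J"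
      unfolding Z_def by (rule indep_vars_compose2[where X=\<xi>]) auto
    show "expectation (Z j) = 0" if "j \<in> J" for j
      using integrable_min_\<xi>[OF J1[OF that] w] expectation_min_\<xi>[OF J1[OF that] w]
      by (simp add: Z_def[abs_def] prob_space)
    show "\<bar>Z j \<omega>\<bar> \<le> w + G w" if "j \<in> J" "\<omega> \<in> space M" for j \<omega>
      using min_\<xi>_bounded[OF J1[OF that(1)] that(2) w] G_nonneg[OF w] unfolding Z_def by linarith
  qed (fact J)
  also have "\<dots> \<le> (\<Sum>j\<in>J. trunc_moment2 w)"
    using J1 variance_min_\<xi>_le[OF _ w] expectation_min_\<xi>[OF _ w]
    by (intro sum_mono) (simp add: Z_def)
  finally have T_var: "variance T \<le> real (card J) * trunc_moment2 w"
    by simp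
  have T_square: "integrable M (\<lambda>\<omega>. (T \<omega>)^2)"
  proof (rule integrable_square_if_bounded)
    show "T \<in> borel_measurable M"
      unfolding T_def by measurable
    show "\<bar>T \<omega>\<bar> \<le> real (card J) * w" if "\<omega> \<in> space M" for \<omega>
      unfolding T_def using J1 min_\<xi>_bounded that w by (intro abs_sum_le_card_mult) auto
  qed
  have "prob {\<omega>\<in>space M. \<bar>T \<omega> - expectation T\<bar> \<ge> s} \<le> variance T / s^2"
    using s T_square by (intro Chebyshev_inequality) (auto simp: T_def)
  also have "\<dots> \<le> real (card J) * trunc_moment2 w / s^2"
    using T_var by (simp add: divide_right_mono)
  finally show ?thesis
    by (simp add: T_def T_mean)
qed

lemma integrable_sum_indicator_\<xi>_ge:
  fixes c :: "nat \<Rightarrow> real"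
  shows "integrable M (\<lambda>\<omega>. \<Sum>j<K. c j * indicator {\<omega>\<in>space M. t j \<le> \<xi> 1 \<omega>} \<omega>)"
proof (rule Bochner_Integration.integrable_sum)
  fix j
  have "{\<omega>\<in>space M. t j \<le> \<xi> 1 \<omega>} \<in> events"
    by measurable
  then show "integrable M (\<lambda>\<omega>. c j * indicator {\<omega>\<in>space M. t j \<le> \<xi> 1 \<omega>} \<omega>)"
    by (intro integrable_mult_right integrable_real_indicator) (auto simp: emeasure_eq_measure)
qed

lemma expectation_sum_indicator_\<xi>_ge:
  fixes c :: "nat \<Rightarrow> real"
  shows "expectation (\<lambda>\<omega>. \<Sum>j<K. c j * indicator {\<omega>\<in>space M. t j \<le> \<xi> 1 \<omega>} \<omega>) = (\<Sum>j<K. c j * Fbar (t j))"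
proof -
  define f where "f j \<omega> = c j * indicator {\<omega>\<in>space M. t j \<le> \<xi> 1 \<omega>} \<omega>" for j \<omega>
  have "integrable M (f j)" for j
    using integrable_sum_indicator_\<xi>_ge[of "\<lambda>_. c j" "\<lambda>_. t j" 1] by (simp add: f_def[abs_def])
  then have "expectation (\<lambda>\<omega>. \<Sum>j<K. f j \<omega>) = (\<Sum>j<K. expectation (f j))"
    by (rule Bochner_Integration.integral_sum)
  moreover have "expectation (f j) = c j * Fbar (t j)" for j
  proof -
    have "{\<omega>\<in>space M. t j \<le> \<xi> 1 \<omega>} \<in> events"
      by measurable
    then show ?thesis
      by (simp add: f_def[abs_def] Fbar_def emeasure_eq_measure)
  qed
  ultimately show ?thesis
    by (simp add: f_def)
qed

lemma trunc_moment2_le_dyadic_sum: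
  assumes "w \<ge> 0"
  shows "trunc_moment2 w \<le> (\<Sum>j<J. (w/2^j)^2 * Fbar (w/2^(j+1))) + (w/2^J)^2"
proof -
  define E where "E j = {\<omega>\<in>space M. w/2^(j+1) \<le> \<xi> 1 \<omega>}" for j
  have "trunc_moment2 w \<le> expectation (\<lambda>\<omega>. (\<Sum>j<J. (w/2^j)^2 * indicator (E j) \<omega>) + (w/2^J)^2)"
    unfolding trunc_moment2_def
  proof (rule integral_mono)
    show "integrable M (\<lambda>\<omega>. (\<Sum>j<J. (w/2^j)^2 * indicator (E j) \<omega>) + (w/2^J)^2)"
      unfolding E_def by (rule Bochner_Integration.integrable_add[OF integrable_sum_indicator_\<xi>_ge]) simp
    show "(min (\<xi> 1 \<omega>) w)^2 \<le> (\<Sum>j<J. (w/2^j)^2 * indicator (E j) \<omega>) + (w/2^J)^2"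
      if "\<omega> \<in> space M" for \<omega>
    proof -
      have "(\<Sum>j<J. (w/2^j)^2 * indicator (E j) \<omega>) = (\<Sum>j<J. (w/2^j)^2 * (if \<xi> 1 \<omega> \<ge> w/2^(j+1) then 1 else 0))"
        by (intro sum.cong) (auto simp: E_def indicator_def that)
      then show ?thesis
        using min_square_le_dyadic_sum[OF nonneg[OF _ that] assms, of 1 J] by simp
    qed
  qed (use integrable_min_\<xi>[OF _ assms, of 1] in simp)
  also have "\<dots> = (\<Sum>j<J. (w/2^j)^2 * Fbar (w/2^(j+1))) + (w/2^J)^2"
    using integrable_sum_indicator_\<xi>_ge expectation_sum_indicator_\<xi>_ge
    by (simp add: E_def prob_space)
  finally show ?thesis .
qed

lemma G_ge_dyadic_sum:
  assumes "x \<ge> 0"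
  shows "(\<Sum>j<K. (x/2^(j+1)) * Fbar (x/2^j)) \<le> G x"
proof -
  define E where "E j = {\<omega>\<in>space M. x/2^j \<le> \<xi> 1 \<omega>}" for j
  have "(\<Sum>j<K. (x/2^(j+1)) * Fbar (x/2^j)) = expectation (\<lambda>\<omega>. \<Sum>j<K. (x/2^(j+1)) * indicator (E j) \<omega>)"
    unfolding E_def by (rule expectation_sum_indicator_\<xi>_ge[symmetric])
  also have "\<dots> \<le> expectation (\<lambda>\<omega>. min (\<xi> 1 \<omega>) x)"
  proof (rule integral_mono)
    fix \<omega> assume \<omega>: "\<omega> \<in> space M"
    have "(\<Sum>j<K. (x/2^(j+1)) * indicator (E j) \<omega>) = (\<Sum>j<K. (x/2^(j+1)) * (if \<xi> 1 \<omega> \<ge> x/2^j then 1 else 0))"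
      by (intro sum.cong) (auto simp: E_def indicator_def \<omega>)
    also have "\<dots> \<le> min (\<xi> 1 \<omega>) x"
      using nonneg[OF _ \<omega>] assms by (intro dyadic_sum_le_min) auto
    finally show "(\<Sum>j<K. (x/2^(j+1)) * indicator (E j) \<omega>) \<le> min (\<xi> 1 \<omega>) x" .
  next
    show "integrable M (\<lambda>\<omega>. \<Sum>j<K. (x/2^(j+1)) * indicator (E j) \<omega>)"
      unfolding E_def by (rule integrable_sum_indicator_\<xi>_ge)
  qed (use integrable_min_\<xi>[OF _ assms, of 1] in simp)
  finally show ?thesis
    using G_eq_expectation_min[OF assms] by simp
qed

lemma G_ge_min_1: "z \<ge> 0 \<Longrightarrow> min z 1 / 2 * Fbar 1 \<le> G z"
  using G_ge_dyadic_sum[of "min z 1" 1] G_mono[of "min z 1" z] Fbar_antimono[of "min z 1" 1]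
    mult_left_mono[of "Fbar 1" "Fbar (min z 1)" "min z 1 / 2"]
  by simp

lemma Fbar_div_power2_le:
  assumes doubling: "\<And>t. t \<ge> t0 \<Longrightarrow> Fbar (t/2) \<le> 3 * Fbar t"
    and above: "\<And>i. i < j \<Longrightarrow> w/2^i \<ge> t0"
  shows "Fbar (w/2^j) \<le> 3^j * Fbar w"
  using above
proof (induction j)
  case 0
  then show ?case by simp
next
  case (Suc j)
  have "Fbar (w/2^Suc j) = Fbar ((w/2^j)/2)"
    by (simp add: mult.commute)
  also have "\<dots> \<le> 3 * Fbar (w/2^j)"
    using Suc.prems by (intro doubling) auto
  also have "\<dots> \<le> 3 * (3^j * Fbar w)"
    using Suc by simp
  finally show ?case by simp
qed

lemma dyadic_Fbar_sum_le:
  assumes doubling: "\<And>t. t \<ge> t0 \<Longrightarrow> Fbar (t/2) \<le> 3 * Fbar t"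
    and above: "\<And>j. j < J \<Longrightarrow> w/2^j \<ge> t0"
  shows "(\<Sum>j<J. (w/2^j)^2 * Fbar (w/2^(j+1))) \<le> 12 * w^2 * Fbar w"
proof -
  have "(\<Sum>j<J. (w/2^j)^2 * Fbar (w/2^(j+1))) \<le> (\<Sum>j<J. 3 * w^2 * Fbar w * (3/4)^j)"
  proof (rule sum_mono)
    fix j assume "j \<in> {..<J}"
    then have "Fbar (w/2^(j+1)) \<le> 3^(j+1) * Fbar w"
      using above by (intro Fbar_div_power2_le[OF doubling]) auto
    then have "(w/2^j)^2 * Fbar (w/2^(j+1)) \<le> (w/2^j)^2 * (3^(j+1) * Fbar w)"
      by (intro mult_left_mono) auto
    also have "\<dots> = 3 * w^2 * Fbar w * (3/4)^j"
    proof -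
      have "(w/2^j)^2 = w^2 / 4^j"
        by (simp add: power_divide power2_eq_square flip: power_mult_distrib)
      then show ?thesis
        by (simp add: power_divide field_simps)
    qed
    finally show "(w/2^j)^2 * Fbar (w/2^(j+1)) \<le> 3 * w^2 * Fbar w * (3/4)^j" .
  qed
  also have "\<dots> = 3 * w^2 * Fbar w * ((1 - (3/4)^J) / (1 - 3/4))"
    by (simp add: sum_distrib_left[symmetric] sum_gp_strict)
  also have "\<dots> \<le> 3 * w^2 * Fbar w * 4"
    using Fbar_nonneg[of w] by (intro mult_left_mono) auto
  finally show ?thesis
    by simp
qed

lemma dyadic_square_le:
  assumes doubling: "\<And>t. t \<ge> t0 \<Longrightarrow> Fbar (t/2) \<le> 3 * Fbar t" and "Fbar t0 > 0"
    and J: "w / 2^J < t0" "\<And>j. j < J \<Longrightarrow> w/2^j \<ge> t0"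
  shows "(w/2^J)^2 \<le> w^2 * Fbar w / Fbar t0"
proof -
  have "Fbar t0 \<le> Fbar (w/2^J)"
    using J(1) by (intro Fbar_antimono) simp
  also have "\<dots> \<le> 3^J * Fbar w"
    using J(2) by (intro Fbar_div_power2_le[OF doubling])
  finally have "Fbar t0 * (w^2 / 4^J) \<le> (3^J * Fbar w) * (w^2 / 4^J)"
    by (intro mult_right_mono) auto
  also have "\<dots> = (3/4)^J * (Fbar w * w^2)"
    by (simp add: power_divide)
  also have "\<dots> \<le> 1 * (Fbar w * w^2)"
    using Fbar_nonneg[of w] by (intro mult_right_mono) (auto simp: power_le_one)
  also have "w^2 / 4^J = (w/2^J)^2"
    by (simp add: power_divide power2_eq_square flip: power_mult_distrib)
  finally show ?thesis
    using \<open>Fbar t0 > 0\<close> by (simp add: field_simps)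
qed

(* A Potter-type bound: the doubling condition turns the dyadic estimate of the truncated
   second moment into a geometric series. *)
lemma trunc_moment2_le:
  assumes t0: "t0 > 0" "Fbar t0 > 0" and doubling: "\<And>t. t \<ge> t0 \<Longrightarrow> Fbar (t/2) \<le> 3 * Fbar t"
    and w: "w \<ge> t0"
  shows "trunc_moment2 w \<le> (12 + 1 / Fbar t0) * w^2 * Fbar w"
proof -
  have "(\<lambda>j. w / 2^j) \<longlonglongrightarrow> 0"
    by (intro LIMSEQ_divide_realpow_zero) auto
  then have "\<forall>\<^sub>F j in sequentially. w / 2^j < t0"
    using t0 by (intro order_tendstoD) auto
  then have "\<exists>J. w / 2^J < t0"
    by (simp add: eventually_sequentially) (meson order.refl)
  then obtain J where J: "w / 2^J < t0" "\<And>j. j < J \<Longrightarrow> w / 2^j \<ge> t0"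
    using exists_least_iff[of "\<lambda>J. w / 2^J < t0"] by (auto simp: not_less)
  have "(\<Sum>j<J. (w/2^j)^2 * Fbar (w/2^(j+1))) \<le> 12 * w^2 * Fbar w"
    using doubling J(2) by (rule dyadic_Fbar_sum_le)
  moreover have "(w/2^J)^2 \<le> w^2 * Fbar w / Fbar t0"
    using doubling t0(2) J by (rule dyadic_square_le)
  ultimately have "trunc_moment2 w \<le> 12 * w^2 * Fbar w + w^2 * Fbar w / Fbar t0"
    using trunc_moment2_le_dyadic_sum[of w J] t0 w by linarith
  also have "\<dots> = (12 + 1 / Fbar t0) * w^2 * Fbar w"
    by (simp add: algebra_simps)
  finally show ?thesis .
qed

definition trunc_sum :: "nat set \<Rightarrow> real \<Rightarrow> 'a \<Rightarrow> real" where
  "trunc_sum J w \<omega> = (\<Sum>j\<in>J. min (\<xi> j \<omega>) w)"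

definition big_jump :: "nat \<Rightarrow> real \<Rightarrow> 'a set" where
  "big_jump n y = {\<omega>\<in>space M. \<exists>i\<in>{1..n}. \<xi> i \<omega> \<ge> y}"

definition large_dev :: "nat \<Rightarrow> real \<Rightarrow> real \<Rightarrow> 'a set" where
  "large_dev n x y = {\<omega>\<in>space M. (\<Sum>i\<in>{1..n}. \<xi> i \<omega>) - real n * G x \<ge> y}"

lemma borel_measurable_trunc_sum[measurable]: "trunc_sum J w \<in> borel_measurable M"
  unfolding trunc_sum_def[abs_def] by measurable

lemma sets_big_jump[measurable]: "big_jump n y \<in> events"
  unfolding big_jump_def by measurable

lemma sets_large_dev[measurable]: "large_dev n x y \<in> events"
  unfolding large_dev_def by measurable

lemma prob_trunc_sum_ge_le:
  assumes "J \<subseteq> {1..n}" "w \<ge> 0" "s > 0" "real (card J) * G w \<le> c"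
  shows "prob {\<omega>\<in>space M. trunc_sum J w \<omega> \<ge> c + s} \<le> real n * trunc_moment2 w / s^2"
proof -
  have J: "finite J" "J \<subseteq> {1..}" "real (card J) \<le> real n"
    using assms(1) finite_subset card_mono[OF _ assms(1)] by auto
  have "prob {\<omega>\<in>space M. trunc_sum J w \<omega> \<ge> c + s}
      \<le> prob {\<omega>\<in>space M. s \<le> \<bar>trunc_sum J w \<omega> - real (card J) * G w\<bar>}"
    using assms(4) by (intro finite_measure_mono) auto
  also have "\<dots> \<le> real (card J) * trunc_moment2 w / s^2"
    unfolding trunc_sum_def using J assms by (intro prob_trunc_sum_deviation_le) auto
  also have "\<dots> \<le> real n * trunc_moment2 w / s^2"
    using J trunc_moment2_nonneg by (intro divide_right_mono mult_right_mono) auto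
  finally show ?thesis .
qed

lemma prob_trunc_sum_less_le:
  assumes "J \<subseteq> {1..n}" "w \<ge> 0" "s > 0" "c \<le> real (card J) * G w"
  shows "prob {\<omega>\<in>space M. trunc_sum J w \<omega> < c - s} \<le> real n * trunc_moment2 w / s^2"
proof -
  have J: "finite J" "J \<subseteq> {1..}" "real (card J) \<le> real n"
    using assms(1) finite_subset card_mono[OF _ assms(1)] by auto
  have "prob {\<omega>\<in>space M. trunc_sum J w \<omega> < c - s}
      \<le> prob {\<omega>\<in>space M. s \<le> \<bar>trunc_sum J w \<omega> - real (card J) * G w\<bar>}"
    using assms(4) by (intro finite_measure_mono) auto
  also have "\<dots> \<le> real (card J) * trunc_moment2 w / s^2"
    unfolding trunc_sum_def using J assms by (intro prob_trunc_sum_deviation_le) auto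
  also have "\<dots> \<le> real n * trunc_moment2 w / s^2"
    using J trunc_moment2_nonneg by (intro divide_right_mono mult_right_mono) auto
  finally show ?thesis .
qed

lemma prob_\<xi>_ge_and_trunc_sum_eq:
  assumes "i \<ge> 1" "finite J" "J \<subseteq> {1..}" "i \<notin> J" "B \<in> sets borel"
  shows "prob {\<omega>\<in>space M. \<xi> i \<omega> \<ge> t \<and> trunc_sum J w \<omega> \<in> B}
       = Fbar t * prob {\<omega>\<in>space M. trunc_sum J w \<omega> \<in> B}"
  using prob_\<xi>_and_sum_eq[of J i "{t..}" B "\<lambda>v. min v w"] prob_\<xi>_ge[of i t] assms
  by (simp add: trunc_sum_def)

lemma prob_\<xi>_both_ge:
  assumes "i \<ge> 1" "j \<ge> 1" "i \<noteq> j"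
  shows "prob {\<omega>\<in>space M. \<xi> i \<omega> \<ge> y \<and> \<xi> j \<omega> \<ge> y} = (Fbar y)^2"
  using prob_\<xi>_and_sum_eq[of "{j}" i "{y..}" "{y..}" "\<lambda>v. v"] prob_\<xi>_ge assms
  by (simp add: power2_eq_square)

lemma prob_\<xi>_between:
  assumes "i \<ge> 1" "s \<le> t"
  shows "prob {\<omega>\<in>space M. s \<le> \<xi> i \<omega> \<and> \<xi> i \<omega> < t} = Fbar s - Fbar t"
proof -
  have "{\<omega>\<in>space M. s \<le> \<xi> i \<omega> \<and> \<xi> i \<omega> < t} = {\<omega>\<in>space M. s \<le> \<xi> i \<omega>} - {\<omega>\<in>space M. t \<le> \<xi> i \<omega>}"
    using assms(2) by auto
  also have "prob \<dots> = prob {\<omega>\<in>space M. s \<le> \<xi> i \<omega>} - prob {\<omega>\<in>space M. t \<le> \<xi> i \<omega>}"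
    using assms(2) by (intro finite_measure_Diff) auto
  finally show ?thesis
    using prob_\<xi>_ge[OF assms(1)] by simp
qed

lemma prob_big_jump_le: "prob (big_jump n y) \<le> real n * Fbar y"
proof -
  have "big_jump n y = (\<Union>i\<in>{1..n}. {\<omega>\<in>space M. \<xi> i \<omega> \<ge> y})"
    by (auto simp: big_jump_def)
  also have "prob \<dots> \<le> (\<Sum>i\<in>{1..n}. prob {\<omega>\<in>space M. \<xi> i \<omega> \<ge> y})"
    by (intro finite_measure_subadditive_finite) auto
  also have "\<dots> = real n * Fbar y"
    using prob_\<xi>_ge by simp
  finally show ?thesis .
qed

lemma prob_big_jump_ge: "real n * Fbar y - (real n * Fbar y)^2 \<le> prob (big_jump n y)"
proof (induction n)
  case 0
  then show ?case by simp
next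
  case (Suc k)
  define A where "A = {\<omega>\<in>space M. \<xi> (Suc k) \<omega> \<ge> y}"
  have A: "A \<in> events"
    unfolding A_def by measurable
  have split: "big_jump (Suc k) y = big_jump k y \<union> A"
    unfolding big_jump_def A_def by (auto simp: atLeastAtMostSuc_conv)
  have "A \<inter> big_jump k y = (\<Union>i\<in>{1..k}. {\<omega>\<in>space M. \<xi> (Suc k) \<omega> \<ge> y \<and> \<xi> i \<omega> \<ge> y})"
    unfolding A_def big_jump_def by auto
  also have "prob \<dots> \<le> (\<Sum>i\<in>{1..k}. prob {\<omega>\<in>space M. \<xi> (Suc k) \<omega> \<ge> y \<and> \<xi> i \<omega> \<ge> y})"
    by (intro finite_measure_subadditive_finite) auto
  also have "\<dots> = real k * (Fbar y)^2"
    using prob_\<xi>_both_ge by simp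
  finally have overlap: "prob (A \<inter> big_jump k y) \<le> real k * (Fbar y)^2" .
  have "prob (big_jump (Suc k) y) = prob (big_jump k y) + prob A - prob (A \<inter> big_jump k y)"
    unfolding split using A by (simp add: measure_Un3 fmeasurable_eq_sets Int_commute)
  moreover have "prob A = Fbar y"
    unfolding A_def by (rule prob_\<xi>_ge) simp
  moreover have "real k * (Fbar y)^2 + (real k * Fbar y)^2 \<le> (real (Suc k) * Fbar y)^2"
    by (simp add: power2_eq_square algebra_simps)
  moreover have "real (Suc k) * Fbar y = real k * Fbar y + Fbar y"
    by (simp add: algebra_simps)
  ultimately show ?case
    using Suc.IH overlap by linarith
qed

lemma prob_two_\<xi>_ge_le:
  "prob {\<omega>\<in>space M. \<exists>i\<in>{1..n}. \<exists>j\<in>{1..n}. i \<noteq> j \<and> \<xi> i \<omega> \<ge> w \<and> \<xi> j \<omega> \<ge> w} \<le> (real n * Fbar w)^2"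
proof -
  have "{\<omega>\<in>space M. \<exists>i\<in>{1..n}. \<exists>j\<in>{1..n}. i \<noteq> j \<and> \<xi> i \<omega> \<ge> w \<and> \<xi> j \<omega> \<ge> w}
      = (\<Union>i\<in>{1..n}. \<Union>j\<in>{1..n}-{i}. {\<omega>\<in>space M. \<xi> i \<omega> \<ge> w \<and> \<xi> j \<omega> \<ge> w})"
    by auto
  also have "prob \<dots> \<le> (\<Sum>i\<in>{1..n}. prob (\<Union>j\<in>{1..n}-{i}. {\<omega>\<in>space M. \<xi> i \<omega> \<ge> w \<and> \<xi> j \<omega> \<ge> w}))"
    by (intro finite_measure_subadditive_finite) auto
  also have "\<dots> \<le> (\<Sum>i\<in>{1..n}. \<Sum>j\<in>{1..n}-{i}. prob {\<omega>\<in>space M. \<xi> i \<omega> \<ge> w \<and> \<xi> j \<omega> \<ge> w})"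
    by (intro sum_mono finite_measure_subadditive_finite) auto
  also have "\<dots> = (\<Sum>i\<in>{1..n}. \<Sum>j\<in>{1..n}-{i}. (Fbar w)^2)"
    by (intro sum.cong refl prob_\<xi>_both_ge) auto
  also have "\<dots> \<le> (\<Sum>i\<in>{1..n}. \<Sum>j\<in>{1..n}. (Fbar w)^2)"
    by (intro sum_mono sum_mono2) auto
  finally show ?thesis
    by (simp add: power2_eq_square algebra_simps)
qed

lemma prob_some_\<xi>_between_le:
  assumes "s \<le> t"
  shows "prob {\<omega>\<in>space M. \<exists>i\<in>{1..n}. s \<le> \<xi> i \<omega> \<and> \<xi> i \<omega> < t} \<le> real n * (Fbar s - Fbar t)"
proof -
  have "{\<omega>\<in>space M. \<exists>i\<in>{1..n}. s \<le> \<xi> i \<omega> \<and> \<xi> i \<omega> < t}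
      = (\<Union>i\<in>{1..n}. {\<omega>\<in>space M. s \<le> \<xi> i \<omega> \<and> \<xi> i \<omega> < t})"
    by auto
  also have "prob \<dots> \<le> (\<Sum>i\<in>{1..n}. prob {\<omega>\<in>space M. s \<le> \<xi> i \<omega> \<and> \<xi> i \<omega> < t})"
    by (intro finite_measure_subadditive_finite) auto
  also have "\<dots> = real n * (Fbar s - Fbar t)"
    using prob_\<xi>_between[OF _ assms] by simp
  finally show ?thesis .
qed

lemma prob_some_\<xi>_ge_and_rest_le:
  assumes B: "B \<in> sets borel"
    and rest: "\<And>i. i \<in> {1..n} \<Longrightarrow> prob {\<omega>\<in>space M. trunc_sum ({1..n}-{i}) w \<omega> \<in> B} \<le> p"
  shows "prob (\<Union>i\<in>{1..n}. {\<omega>\<in>space M. \<xi> i \<omega> \<ge> t \<and> trunc_sum ({1..n}-{i}) w \<omega> \<in> B})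
    \<le> real n * Fbar t * p"
proof -
  have "prob (\<Union>i\<in>{1..n}. {\<omega>\<in>space M. \<xi> i \<omega> \<ge> t \<and> trunc_sum ({1..n}-{i}) w \<omega> \<in> B})
      \<le> (\<Sum>i\<in>{1..n}. prob {\<omega>\<in>space M. \<xi> i \<omega> \<ge> t \<and> trunc_sum ({1..n}-{i}) w \<omega> \<in> B})"
    using B by (intro finite_measure_subadditive_finite) auto
  also have "\<dots> = (\<Sum>i\<in>{1..n}. Fbar t * prob {\<omega>\<in>space M. trunc_sum ({1..n}-{i}) w \<omega> \<in> B})"
    using B by (intro sum.cong refl prob_\<xi>_ge_and_trunc_sum_eq) auto
  also have "\<dots> \<le> (\<Sum>i\<in>{1..n}. Fbar t * p)"
    using rest by (intro sum_mono mult_left_mono Fbar_nonneg) auto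
  finally show ?thesis
    by simp
qed

lemma big_jump_diff_large_dev_subset:
  "big_jump n y - large_dev n x y \<subseteq>
     {\<omega>\<in>space M. \<exists>i\<in>{1..n}. y \<le> \<xi> i \<omega> \<and> \<xi> i \<omega> < (1+\<delta>)*y}
   \<union> (\<Union>i\<in>{1..n}. {\<omega>\<in>space M. \<xi> i \<omega> \<ge> (1+\<delta>)*y \<and> trunc_sum ({1..n}-{i}) x \<omega> \<in> {..<real n * G x - \<delta>*y}})"
proof
  fix \<omega> assume \<omega>: "\<omega> \<in> big_jump n y - large_dev n x y"
  then obtain i where i: "i \<in> {1..n}" "\<xi> i \<omega> \<ge> y" and "\<omega> \<in> space M"
    unfolding big_jump_def by auto
  have small_sum: "(\<Sum>j\<in>{1..n}. \<xi> j \<omega>) < real n * G x + y"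
    using \<omega> unfolding large_dev_def big_jump_def by auto
  have "trunc_sum ({1..n}-{i}) x \<omega> \<le> (\<Sum>j\<in>{1..n}-{i}. \<xi> j \<omega>)"
    unfolding trunc_sum_def by (intro sum_mono) auto
  also have "\<dots> = (\<Sum>j\<in>{1..n}. \<xi> j \<omega>) - \<xi> i \<omega>"
    using i by (simp add: sum_diff1)
  finally have "trunc_sum ({1..n}-{i}) x \<omega> < real n * G x + y - \<xi> i \<omega>"
    using small_sum by linarith
  then show "\<omega> \<in> {\<omega>\<in>space M. \<exists>i\<in>{1..n}. y \<le> \<xi> i \<omega> \<and> \<xi> i \<omega> < (1+\<delta>)*y}
   \<union> (\<Union>i\<in>{1..n}. {\<omega>\<in>space M. \<xi> i \<omega> \<ge> (1+\<delta>)*y \<and> trunc_sum ({1..n}-{i}) x \<omega> \<in> {..<real n * G x - \<delta>*y}})"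
  proof (cases "\<xi> i \<omega> < (1+\<delta>)*y")
    case False
    then have "trunc_sum ({1..n}-{i}) x \<omega> < real n * G x - \<delta>*y"
      using \<open>trunc_sum ({1..n}-{i}) x \<omega> < real n * G x + y - \<xi> i \<omega>\<close> by (simp add: algebra_simps)
    then show ?thesis
      using False i \<open>\<omega> \<in> space M\<close> by auto
  qed (use i \<open>\<omega> \<in> space M\<close> in auto)
qed

lemma prob_big_jump_diff_large_dev_le:
  assumes "n \<ge> 1" "y > 0" "x \<ge> 0" "\<delta> > 0" and G_small: "G x \<le> \<delta>*y/2"
  shows "prob (big_jump n y - large_dev n x y)
     \<le> real n * (Fbar y - Fbar ((1+\<delta>)*y)) + real n * Fbar ((1+\<delta>)*y) * (real n * trunc_moment2 x / (\<delta>*y/2)^2)"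
proof -
  have "prob (big_jump n y - large_dev n x y)
     \<le> prob ({\<omega>\<in>space M. \<exists>i\<in>{1..n}. y \<le> \<xi> i \<omega> \<and> \<xi> i \<omega> < (1+\<delta>)*y}
      \<union> (\<Union>i\<in>{1..n}. {\<omega>\<in>space M. \<xi> i \<omega> \<ge> (1+\<delta>)*y \<and> trunc_sum ({1..n}-{i}) x \<omega> \<in> {..<real n * G x - \<delta>*y}}))"
    by (intro finite_measure_mono[OF big_jump_diff_large_dev_subset]) measurable
  also have "\<dots> \<le> prob {\<omega>\<in>space M. \<exists>i\<in>{1..n}. y \<le> \<xi> i \<omega> \<and> \<xi> i \<omega> < (1+\<delta>)*y}
      + prob (\<Union>i\<in>{1..n}. {\<omega>\<in>space M. \<xi> i \<omega> \<ge> (1+\<delta>)*y \<and> trunc_sum ({1..n}-{i}) x \<omega> \<in> {..<real n * G x - \<delta>*y}})"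
    by (intro measure_subadditive) auto
  also have "prob {\<omega>\<in>space M. \<exists>i\<in>{1..n}. y \<le> \<xi> i \<omega> \<and> \<xi> i \<omega> < (1+\<delta>)*y} \<le> real n * (Fbar y - Fbar ((1+\<delta>)*y))"
    using assms by (intro prob_some_\<xi>_between_le) auto
  also have "prob (\<Union>i\<in>{1..n}. {\<omega>\<in>space M. \<xi> i \<omega> \<ge> (1+\<delta>)*y \<and> trunc_sum ({1..n}-{i}) x \<omega> \<in> {..<real n * G x - \<delta>*y}})
     \<le> real n * Fbar ((1+\<delta>)*y) * (real n * trunc_moment2 x / (\<delta>*y/2)^2)"
  proof (intro prob_some_\<xi>_ge_and_rest_le)
    fix i assume "i \<in> {1..n}"
    then have "real n * G x - \<delta>*y/2 \<le> real (card ({1..n}-{i})) * G x"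
      using G_small assms(1) by (simp add: of_nat_diff algebra_simps)
    then show "prob {\<omega>\<in>space M. trunc_sum ({1..n}-{i}) x \<omega> \<in> {..<real n * G x - \<delta>*y}}
        \<le> real n * trunc_moment2 x / (\<delta>*y/2)^2"
      using prob_trunc_sum_less_le[of "{1..n}-{i}" n x "\<delta>*y/2" "real n * G x - \<delta>*y/2"] assms by simp
  qed simp
  finally show ?thesis
    by simp
qed

lemma large_dev_diff_big_jump_subset:
  "large_dev n x y - big_jump n y \<subseteq>
     {\<omega>\<in>space M. \<exists>i\<in>{1..n}. \<exists>j\<in>{1..n}. i \<noteq> j \<and> \<xi> i \<omega> \<ge> w \<and> \<xi> j \<omega> \<ge> w}
   \<union> {\<omega>\<in>space M. \<exists>i\<in>{1..n}. (1-\<delta>)*y \<le> \<xi> i \<omega> \<and> \<xi> i \<omega> < y}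
   \<union> (\<Union>i\<in>{1..n}. {\<omega>\<in>space M. \<xi> i \<omega> \<ge> w \<and> trunc_sum ({1..n}-{i}) w \<omega> \<in> {real n * G x + \<delta>*y..}})
   \<union> {\<omega>\<in>space M. trunc_sum {1..n} w \<omega> \<ge> real n * G x + y}"
  (is "_ \<subseteq> ?two \<union> ?near \<union> ?one \<union> ?none")
proof
  fix \<omega> assume \<omega>: "\<omega> \<in> large_dev n x y - big_jump n y"
  then have space: "\<omega> \<in> space M" and large: "(\<Sum>i\<in>{1..n}. \<xi> i \<omega>) \<ge> real n * G x + y"
    and below: "\<And>i. i \<in> {1..n} \<Longrightarrow> \<xi> i \<omega> < y"
    unfolding large_dev_def big_jump_def by (auto simp: not_le)
  consider (two) "\<exists>i\<in>{1..n}. \<exists>j\<in>{1..n}. i \<noteq> j \<and> \<xi> i \<omega> \<ge> w \<and> \<xi> j \<omega> \<ge> w"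
    | (near) "\<exists>i\<in>{1..n}. (1-\<delta>)*y \<le> \<xi> i \<omega>"
    | (one) i where "i \<in> {1..n}" "\<xi> i \<omega> \<ge> w" "\<xi> i \<omega> < (1-\<delta>)*y"
        "\<And>j. j \<in> {1..n}-{i} \<Longrightarrow> \<xi> j \<omega> < w"
    | (none) "\<And>i. i \<in> {1..n} \<Longrightarrow> \<xi> i \<omega> < w"
    by (metis Diff_iff insertI1 linorder_not_le)
  then show "\<omega> \<in> ?two \<union> ?near \<union> ?one \<union> ?none"
  proof cases
    case near
    then show ?thesis using below space by auto
  next
    case one
    have "trunc_sum ({1..n}-{i}) w \<omega> = (\<Sum>j\<in>{1..n}-{i}. \<xi> j \<omega>)"
      unfolding trunc_sum_def using one(4) by (intro sum.cong) auto
    also have "\<dots> = (\<Sum>j\<in>{1..n}. \<xi> j \<omega>) - \<xi> i \<omega>"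
      using one(1) by (simp add: sum_diff1)
    finally have "trunc_sum ({1..n}-{i}) w \<omega> \<ge> real n * G x + \<delta>*y"
      using large one(3) by (simp add: algebra_simps)
    then show ?thesis using one space by auto
  next
    case none
    then have "trunc_sum {1..n} w \<omega> = (\<Sum>j\<in>{1..n}. \<xi> j \<omega>)"
      unfolding trunc_sum_def by (intro sum.cong) auto
    then show ?thesis using large space by auto
  qed (use space in auto)
qed

lemma prob_large_dev_diff_big_jump_le:
  assumes "y > 0" "0 < w" "w \<le> x" "0 < \<delta>" "\<delta> < 1"
  shows "prob (large_dev n x y - big_jump n y)
     \<le> (real n * Fbar w)^2 + real n * (Fbar ((1-\<delta>)*y) - Fbar y)
       + real n * Fbar w * (real n * trunc_moment2 w / (\<delta>*y)^2) + real n * trunc_moment2 w / y^2"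
proof -
  have centre: "real (card J) * G w \<le> real n * G x" if "J \<subseteq> {1..n}" for J
  proof -
    have "real (card J) \<le> real n"
      using card_mono[OF _ that] by simp
    then show ?thesis
      using G_mono[of w x] G_nonneg[of w] assms by (intro mult_mono) auto
  qed
  have "prob (large_dev n x y - big_jump n y)
     \<le> prob ({\<omega>\<in>space M. \<exists>i\<in>{1..n}. \<exists>j\<in>{1..n}. i \<noteq> j \<and> \<xi> i \<omega> \<ge> w \<and> \<xi> j \<omega> \<ge> w}
         \<union> {\<omega>\<in>space M. \<exists>i\<in>{1..n}. (1-\<delta>)*y \<le> \<xi> i \<omega> \<and> \<xi> i \<omega> < y}
         \<union> (\<Union>i\<in>{1..n}. {\<omega>\<in>space M. \<xi> i \<omega> \<ge> w \<and> trunc_sum ({1..n}-{i}) w \<omega> \<in> {real n * G x + \<delta>*y..}})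
         \<union> {\<omega>\<in>space M. trunc_sum {1..n} w \<omega> \<ge> real n * G x + y})"
    (is "_ \<le> prob (?two \<union> ?near \<union> ?one \<union> ?none)")
    by (intro finite_measure_mono[OF large_dev_diff_big_jump_subset]) measurable
  also have "\<dots> \<le> prob ?two + prob ?near + prob ?one + prob ?none"
    using measure_subadditive[of "?two \<union> ?near \<union> ?one" M ?none]
      measure_subadditive[of "?two \<union> ?near" M ?one] measure_subadditive[of ?two M ?near]
    by simp
  also have "prob ?two \<le> (real n * Fbar w)^2"
    by (rule prob_two_\<xi>_ge_le)
  also have "prob ?near \<le> real n * (Fbar ((1-\<delta>)*y) - Fbar y)"
    using assms by (intro prob_some_\<xi>_between_le) auto
  also have "prob ?one \<le> real n * Fbar w * (real n * trunc_moment2 w / (\<delta>*y)^2)"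
    using assms centre prob_trunc_sum_ge_le[of "{1..n}-{_}" n w "\<delta>*y" "real n * G x"]
    by (intro prob_some_\<xi>_ge_and_rest_le) auto
  also have "prob ?none \<le> real n * trunc_moment2 w / y^2"
    using assms centre[of "{1..n}"] by (intro prob_trunc_sum_ge_le) auto
  finally show ?thesis
    by simp
qed

end

section \<open>Regularly varying tails\<close>

locale iid_nonneg_regular_tail = iid_nonneg +
  fixes l :: "real \<Rightarrow> real"
  assumes slowly_varying: "slowly_varying l"
    and tail: "\<forall>\<^sub>F t in at_top. iid_nonneg.Fbar M \<xi> t = l t / t"
begin

lemma Fbar_ratio_tendsto: "c > 0 \<Longrightarrow> ((\<lambda>t. Fbar (c*t) / Fbar t) \<longlongrightarrow> 1/c) at_top"
  using slowly_varying_tail_ratio[OF slowly_varying tail] .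

lemma Fbar_pos: "Fbar t > 0"
proof -
  have "((\<lambda>s. Fbar (1 * s) / Fbar s) \<longlongrightarrow> 1/1) at_top"
    by (rule Fbar_ratio_tendsto) simp
  then have "\<forall>\<^sub>F s in at_top. Fbar (1 * s) / Fbar s > 1/2"
    by (rule order_tendstoD) simp
  then obtain N where "\<And>s. s \<ge> N \<Longrightarrow> Fbar s / Fbar s > 1/2"
    by (auto simp: eventually_at_top_linorder)
  from this[of "max t N"] have "Fbar (max t N) \<noteq> 0"
    by auto
  then show ?thesis
    using Fbar_antimono[of t "max t N"] Fbar_nonneg[of "max t N"] by linarith
qed

lemma eventually_Fbar_half_le: "\<forall>\<^sub>F t in at_top. Fbar (t/2) \<le> 3 * Fbar t"
proof -
  have "((\<lambda>t. Fbar ((1/2) * t) / Fbar t) \<longlongrightarrow> 1/(1/2)) at_top"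
    by (rule Fbar_ratio_tendsto) simp
  then have "\<forall>\<^sub>F t in at_top. Fbar ((1/2) * t) / Fbar t < 3"
    by (rule order_tendstoD) simp
  then show ?thesis
    by eventually_elim (use Fbar_pos in \<open>simp add: field_simps\<close>)
qed

lemma trunc_moment2_bigo: "\<exists>C>0. \<forall>\<^sub>F w in at_top. trunc_moment2 w \<le> C * w^2 * Fbar w"
proof -
  obtain t0 where doubling: "\<And>t. t \<ge> t0 \<Longrightarrow> Fbar (t/2) \<le> 3 * Fbar t"
    using eventually_Fbar_half_le by (auto simp: eventually_at_top_linorder)
  define t1 where "t1 = max t0 1"
  have "\<forall>\<^sub>F w in at_top. trunc_moment2 w \<le> (12 + 1 / Fbar t1) * w^2 * Fbar w"
    using eventually_ge_at_top[of t1]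
  proof eventually_elim
    case (elim w)
    show ?case
      using doubling elim by (intro trunc_moment2_le Fbar_pos) (auto simp: t1_def)
  qed
  moreover have "12 + 1 / Fbar t1 > 0"
    using Fbar_pos[of t1] by (simp add: add_pos_pos)
  ultimately show ?thesis
    by blast
qed

lemma G_pos:
  assumes "x > 0"
  shows "G x > 0"
proof -
  have "0 < min x 1 / 2 * Fbar 1"
    using assms Fbar_pos[of 1] by simp
  then show ?thesis
    using G_ge_min_1[of x] assms by linarith
qed

(* G(x) dominates the dyadic sum of (x / 2^(j+1)) Fbar(x / 2^j) over j < K, which is
   asymptotic to (K / 2) x Fbar(x). *)
lemma x_Fbar_over_G_tendsto_0: "((\<lambda>x. x * Fbar x / G x) \<longlongrightarrow> 0) at_top"
proof (rule tendsto_zero_if_eventually_less)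
  show "\<forall>\<^sub>F x in at_top. 0 \<le> x * Fbar x / G x"
    using eventually_ge_at_top[of 0] by eventually_elim (simp add: Fbar_nonneg G_nonneg)
next
  fix \<epsilon> :: real assume "\<epsilon> > 0"
  obtain K :: nat where K: "4 / \<epsilon> < real K"
    using reals_Archimedean2 by blast
  moreover have "0 < 4 / \<epsilon>"
    using \<open>\<epsilon> > 0\<close> by simp
  ultimately have K_pos: "real K > 0"
    by linarith
  have K_eps: "4 / real K < \<epsilon>"
    using K K_pos \<open>\<epsilon> > 0\<close> by (simp add: field_simps)
  have "((\<lambda>x. \<Sum>j<K. (1/2^(j+1)) * (Fbar ((1/2^j) * x) / Fbar x))
      \<longlongrightarrow> (\<Sum>j<K. (1/2^(j+1)) * (1/(1/2^j)))) at_top"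
    by (intro tendsto_sum tendsto_mult tendsto_const Fbar_ratio_tendsto) simp
  moreover have "(\<Sum>j<K. (1/2^(j+1)) * (1/(1/2^j)) :: real) = real K / 2"
    by simp
  ultimately have "\<forall>\<^sub>F x in at_top. (\<Sum>j<K. (1/2^(j+1)) * (Fbar ((1/2^j) * x) / Fbar x)) > real K / 4"
    using K_pos by (intro order_tendstoD) auto
  then show "\<forall>\<^sub>F x in at_top. x * Fbar x / G x < \<epsilon>"
    using eventually_gt_at_top[of 0]
  proof eventually_elim
    case (elim x)
    have "x * Fbar x * (real K / 4) < x * Fbar x * (\<Sum>j<K. (1/2^(j+1)) * (Fbar ((1/2^j) * x) / Fbar x))"
      using elim Fbar_pos[of x] by (intro mult_strict_left_mono) auto
    also have "\<dots> = (\<Sum>j<K. (x/2^(j+1)) * Fbar (x/2^j))"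
      using Fbar_pos[of x] by (simp add: sum_distrib_left field_simps)
    also have "\<dots> \<le> G x"
      using elim by (intro G_ge_dyadic_sum) simp
    finally have "x * Fbar x / G x < 4 / real K"
      using G_pos[of x] elim K_pos by (simp add: field_simps)
    then show ?case
      using K_eps by simp
  qed
qed

lemma Fbar_ratio_compose_tendsto:
  assumes "filterlim x at_top sequentially" "r > 0"
  shows "(\<lambda>n. Fbar (r * x n) / Fbar (x n)) \<longlonglongrightarrow> 1/r"
  using filterlim_compose[OF Fbar_ratio_tendsto[OF assms(2)] assms(1)] by simp

(* Monotonicity of Fbar replaces the uniform convergence theorem for regularly varying
   functions. *)
lemma eventually_Fbar_ratio_seq_less:
  assumes x: "filterlim x at_top sequentially" and b: "b \<longlonglongrightarrow> b0" "b0 > 0" and u: "u > 1/b0"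
  shows "\<forall>\<^sub>F n in sequentially. Fbar (b n * x n) / Fbar (x n) < u"
proof -
  have "u > 0"
    using u b(2) by (smt (verit) divide_pos_pos)
  then have "1/u < b0"
    using u b(2) by (simp add: field_simps)
  then obtain r where r: "1/u < r" "r < b0"
    using dense by blast
  then have "r > 0" "1/r < u"
    using \<open>u > 0\<close> by (auto simp: field_simps order.strict_trans[OF _ r(1)])
  then have "\<forall>\<^sub>F n in sequentially. Fbar (r * x n) / Fbar (x n) < u"
    using Fbar_ratio_compose_tendsto[OF x] by (intro order_tendstoD) auto
  moreover have "\<forall>\<^sub>F n in sequentially. r < b n"
    using b r by (intro order_tendstoD) auto
  moreover have "\<forall>\<^sub>F n in sequentially. x n \<ge> 0"
    using x by (simp add: filterlim_at_top)
  ultimately show ?thesis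
  proof eventually_elim
    case (elim n)
    have "Fbar (b n * x n) \<le> Fbar (r * x n)"
      using elim by (intro Fbar_antimono mult_right_mono) auto
    then have "Fbar (b n * x n) / Fbar (x n) \<le> Fbar (r * x n) / Fbar (x n)"
      using Fbar_pos[of "x n"] by (intro divide_right_mono) auto
    then show ?case
      using elim by linarith
  qed
qed

lemma eventually_Fbar_ratio_seq_greater:
  assumes x: "filterlim x at_top sequentially" and b: "b \<longlonglongrightarrow> b0" "b0 > 0" and u: "u < 1/b0"
  shows "\<forall>\<^sub>F n in sequentially. u < Fbar (b n * x n) / Fbar (x n)"
proof (cases "u > 0")
  case True
  then have "b0 < 1/u"
    using u b(2) by (simp add: field_simps)
  then obtain r where r: "b0 < r" "r < 1/u"
    using dense by blast
  then have "r > 0" "u < 1/r"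
    using True b(2) by (auto simp: field_simps)
  then have "\<forall>\<^sub>F n in sequentially. u < Fbar (r * x n) / Fbar (x n)"
    using Fbar_ratio_compose_tendsto[OF x] by (intro order_tendstoD) auto
  moreover have "\<forall>\<^sub>F n in sequentially. b n < r"
    using b r by (intro order_tendstoD) auto
  moreover have "\<forall>\<^sub>F n in sequentially. x n \<ge> 0"
    using x by (simp add: filterlim_at_top)
  ultimately show ?thesis
  proof eventually_elim
    case (elim n)
    have "Fbar (r * x n) \<le> Fbar (b n * x n)"
      using elim by (intro Fbar_antimono mult_right_mono) auto
    then have "Fbar (r * x n) / Fbar (x n) \<le> Fbar (b n * x n) / Fbar (x n)"
      using Fbar_pos[of "x n"] by (intro divide_right_mono) auto
    then show ?case
      using elim by linarith
  qed
next
  case False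
  then show ?thesis
    using Fbar_pos by (auto intro!: always_eventually order.strict_trans1[OF _ divide_pos_pos])
qed

lemma Fbar_ratio_seq_tendsto:
  assumes "filterlim x at_top sequentially" "b \<longlonglongrightarrow> b0" "b0 > 0"
  shows "(\<lambda>n. Fbar (b n * x n) / Fbar (x n)) \<longlonglongrightarrow> 1/b0"
  using eventually_Fbar_ratio_seq_greater[OF assms] eventually_Fbar_ratio_seq_less[OF assms]
  by (rule order_tendstoI)

end

section \<open>The one big jump regime\<close>

locale big_jump_regime = iid_nonneg_regular_tail +
  fixes x a :: "nat \<Rightarrow> real" and a0 c :: real
  assumes x_pos: "\<And>n. x n > 0" and c_pos: "c > 0"
    and x_large: "\<forall>\<^sub>F n in sequentially. c \<le> x n / (real n * iid_nonneg.G M \<xi> (x n))"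
    and a_lim: "a \<longlonglongrightarrow> a0" and a0_pos: "a0 > 0"
begin

definition Q :: "nat \<Rightarrow> real" where
  "Q n = real n * Fbar (x n) / a0"

lemma Q_pos: "n \<ge> 1 \<Longrightarrow> Q n > 0"
  using Fbar_pos a0_pos by (simp add: Q_def)

lemma eventually_c_n_G_le_x: "\<forall>\<^sub>F n in sequentially. c * (real n * G (x n)) \<le> x n"
  using x_large eventually_ge_at_top[of 1]
  by eventually_elim (use G_pos[OF x_pos] in \<open>simp add: field_simps\<close>)

lemma x_tendsto_at_top: "filterlim x at_top sequentially"
proof -
  define k where "k = c * Fbar 1 / 2"
  have k: "k > 0"
    using c_pos Fbar_pos[of 1] by (simp add: k_def)
  then have lim: "filterlim (\<lambda>n. k * real n) at_top sequentially"
    by (intro filterlim_tendsto_pos_mult_at_top[OF tendsto_const] filterlim_real_sequentially)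
  then have "\<forall>\<^sub>F n in sequentially. k * real n > 1"
    by (simp add: filterlim_at_top_dense)
  with eventually_c_n_G_le_x have "\<forall>\<^sub>F n in sequentially. k * real n \<le> x n"
  proof eventually_elim
    case (elim n)
    have "c * real n * (min (x n) 1 / 2 * Fbar 1) \<le> c * real n * G (x n)"
      using G_ge_min_1[of "x n"] x_pos[of n] c_pos by (intro mult_left_mono) auto
    then have "k * real n * min (x n) 1 \<le> x n"
      using elim by (simp add: k_def algebra_simps)
    moreover have "x n \<ge> 1"
    proof (rule ccontr)
      assume "\<not> x n \<ge> 1"
      then have "k * real n * x n \<le> 1 * x n"
        using \<open>k * real n * min (x n) 1 \<le> x n\<close> by simp
      then show False
        using elim x_pos[of n] mult_le_cancel_right_pos[of "x n"] by simp
    qed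
    ultimately show ?case
      by simp
  qed
  then show ?thesis
    by (rule filterlim_at_top_mono[OF lim])
qed

lemma G_x_over_x_tendsto_0: "(\<lambda>n. G (x n) / x n) \<longlonglongrightarrow> 0"
proof (rule tendsto_sandwich[of "\<lambda>_. 0" _ _ "\<lambda>n. inverse c * (1 / real n)"])
  show "\<forall>\<^sub>F n in sequentially. 0 \<le> G (x n) / x n"
    using G_nonneg x_pos by (intro always_eventually allI) (simp add: less_imp_le)
  show "\<forall>\<^sub>F n in sequentially. G (x n) / x n \<le> inverse c * (1 / real n)"
    using eventually_c_n_G_le_x eventually_ge_at_top[of 1]
    by eventually_elim (use x_pos c_pos in \<open>simp add: field_simps\<close>)
  show "(\<lambda>n. inverse c * (1 / real n)) \<longlonglongrightarrow> 0"
    using tendsto_mult[OF tendsto_const lim_1_over_n, of "inverse c"] by simp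
qed simp

lemma n_Fbar_x_tendsto_0: "(\<lambda>n. real n * Fbar (x n)) \<longlonglongrightarrow> 0"
proof (rule tendsto_sandwich[of "\<lambda>_. 0" _ _ "\<lambda>n. (x n * Fbar (x n) / G (x n)) / c"])
  show "\<forall>\<^sub>F n in sequentially. 0 \<le> real n * Fbar (x n)"
    by (simp add: Fbar_nonneg)
  show "\<forall>\<^sub>F n in sequentially. real n * Fbar (x n) \<le> (x n * Fbar (x n) / G (x n)) / c"
    using eventually_c_n_G_le_x
  proof eventually_elim
    case (elim n)
    then have "(c * (real n * G (x n))) * Fbar (x n) \<le> x n * Fbar (x n)"
      using Fbar_nonneg by (intro mult_right_mono) auto
    then show ?case
      using G_pos[OF x_pos] c_pos by (simp add: field_simps)
  qed
  show "(\<lambda>n. (x n * Fbar (x n) / G (x n)) / c) \<longlonglongrightarrow> 0"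
    using tendsto_divide_zero[OF filterlim_compose[OF x_Fbar_over_G_tendsto_0 x_tendsto_at_top]] by simp
qed simp

lemma Q_tendsto_0: "Q \<longlonglongrightarrow> 0"
  unfolding Q_def[abs_def] using tendsto_divide_zero[OF n_Fbar_x_tendsto_0] by simp

lemma n_Fbar_over_Q_tendsto:
  assumes "r > 0"
  shows "(\<lambda>n. real n * Fbar (r * (a n * x n)) / Q n) \<longlonglongrightarrow> 1/r"
proof -
  have "(\<lambda>n. a0 * (Fbar ((r * a n) * x n) / Fbar (x n))) \<longlonglongrightarrow> a0 * (1/(r * a0))"
    using assms a0_pos a_lim
    by (intro tendsto_mult tendsto_const Fbar_ratio_seq_tendsto x_tendsto_at_top) auto
  moreover have "\<forall>\<^sub>F n in sequentially. a0 * (Fbar ((r * a n) * x n) / Fbar (x n))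
      = real n * Fbar (r * (a n * x n)) / Q n"
    using eventually_ge_at_top[of 1]
    by eventually_elim (use Fbar_pos a0_pos in \<open>simp add: Q_def field_simps\<close>)
  ultimately show ?thesis
    using a0_pos by (simp add: Lim_transform_eventually)
qed

lemma n_Fbar_tendsto_0:
  assumes "r > 0"
  shows "(\<lambda>n. real n * Fbar (r * (a n * x n))) \<longlonglongrightarrow> 0"
proof -
  have "(\<lambda>n. Q n * (real n * Fbar (r * (a n * x n)) / Q n)) \<longlonglongrightarrow> 0 * (1/r)"
    by (intro tendsto_mult Q_tendsto_0 n_Fbar_over_Q_tendsto assms)
  moreover have "\<forall>\<^sub>F n in sequentially. Q n * (real n * Fbar (r * (a n * x n)) / Q n) = real n * Fbar (r * (a n * x n))"
    using eventually_ge_at_top[of 1] by eventually_elim (use Q_pos in \<open>simp add: less_imp_neq[symmetric]\<close>)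
  ultimately show ?thesis
    by (simp add: Lim_transform_eventually)
qed

lemma prob_big_jump_over_Q_tendsto: "(\<lambda>n. prob (big_jump n (a n * x n)) / Q n) \<longlonglongrightarrow> 1"
proof -
  define p where "p n = real n * Fbar (1 * (a n * x n))" for n
  have p_over_Q: "(\<lambda>n. p n / Q n) \<longlonglongrightarrow> 1"
    unfolding p_def using n_Fbar_over_Q_tendsto[of 1] by simp
  show ?thesis
  proof (rule tendsto_sandwich[of "\<lambda>n. p n / Q n - (p n / Q n) * p n" _ _ "\<lambda>n. p n / Q n"])
    show "\<forall>\<^sub>F n in sequentially. p n / Q n - (p n / Q n) * p n \<le> prob (big_jump n (a n * x n)) / Q n"
      using eventually_ge_at_top[of 1]
    proof eventually_elim
      case (elim n)
      have "p n / Q n - (p n / Q n) * p n = (p n - (p n)^2) / Q n"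
        by (simp add: power2_eq_square diff_divide_distrib)
      also have "\<dots> \<le> prob (big_jump n (a n * x n)) / Q n"
        using prob_big_jump_ge[of n "a n * x n"] Q_pos[OF elim] by (intro divide_right_mono) (auto simp: p_def)
      finally show ?case .
    qed
    show "\<forall>\<^sub>F n in sequentially. prob (big_jump n (a n * x n)) / Q n \<le> p n / Q n"
      using eventually_ge_at_top[of 1]
    proof eventually_elim
      case (elim n)
      show ?case
        using prob_big_jump_le[of n "a n * x n"] Q_pos[OF elim] by (simp add: p_def divide_right_mono)
    qed
    have "(\<lambda>n. p n / Q n - (p n / Q n) * p n) \<longlonglongrightarrow> 1 - 1 * 0"
      unfolding p_def using p_over_Q[unfolded p_def] by (intro tendsto_diff tendsto_mult n_Fbar_tendsto_0) auto
    then show "(\<lambda>n. p n / Q n - (p n / Q n) * p n) \<longlonglongrightarrow> 1"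
      by simp
  qed (fact p_over_Q)
qed

lemma eventually_a_between: "\<forall>\<^sub>F n in sequentially. a0/2 < a n \<and> a n < 2*a0"
proof -
  have "\<forall>\<^sub>F n in sequentially. a0/2 < a n"
    using a_lim a0_pos by (intro order_tendstoD) auto
  moreover have "\<forall>\<^sub>F n in sequentially. a n < 2*a0"
    using a_lim a0_pos by (intro order_tendstoD) auto
  ultimately show ?thesis
    by eventually_elim simp
qed

lemma eventually_prob_big_jump_diff_large_dev_le:
  assumes m2: "\<forall>\<^sub>F w in at_top. trunc_moment2 w \<le> C * w^2 * Fbar w" and "C \<ge> 0" "\<delta> > 0"
  shows "\<forall>\<^sub>F n in sequentially.
    prob (big_jump n (a n * x n) - large_dev n (x n) (a n * x n))
    \<le> real n * (Fbar (a n * x n) - Fbar ((1+\<delta>) * (a n * x n)))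
      + real n * Fbar ((1+\<delta>) * (a n * x n)) * (16 * C / (\<delta> * a0)^2 * (real n * Fbar (x n)))"
proof -
  have "\<forall>\<^sub>F n in sequentially. G (x n) / x n < \<delta> * a0 / 4"
    using G_x_over_x_tendsto_0 assms a0_pos by (intro order_tendstoD) auto
  moreover have "\<forall>\<^sub>F n in sequentially. trunc_moment2 (x n) \<le> C * (x n)^2 * Fbar (x n)"
    using m2 x_tendsto_at_top by (rule eventually_compose_filterlim)
  ultimately show ?thesis
    using eventually_a_between eventually_ge_at_top[of 1]
  proof eventually_elim
    case (elim n)
    define y where "y = a n * x n"
    have x: "x n > 0" and y: "y > 0" "\<delta> * a0 * x n / 4 \<le> \<delta> * y / 2"
      using x_pos[of n] elim a0_pos \<open>\<delta> > 0\<close> by (auto simp: y_def)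
    have "G (x n) \<le> \<delta> * y / 2"
      using elim(1) x y(2) by (simp add: field_simps)
    then have "prob (big_jump n y - large_dev n (x n) y)
      \<le> real n * (Fbar y - Fbar ((1+\<delta>)*y)) + real n * Fbar ((1+\<delta>)*y) * (real n * trunc_moment2 (x n) / (\<delta>*y/2)^2)"
      using elim x y \<open>\<delta> > 0\<close> by (intro prob_big_jump_diff_large_dev_le) auto
    also have "real n * trunc_moment2 (x n) / (\<delta>*y/2)^2 \<le> real n * (C * (x n)^2 * Fbar (x n)) / (\<delta> * a0 * x n / 4)^2"
    proof (rule frac_le)
      show "0 \<le> real n * (C * (x n)^2 * Fbar (x n))"
        using \<open>C \<ge> 0\<close> Fbar_nonneg by simp
      show "real n * trunc_moment2 (x n) \<le> real n * (C * (x n)^2 * Fbar (x n))"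
        using elim(2) by (intro mult_left_mono) auto
      show "0 < (\<delta> * a0 * x n / 4)^2"
        using \<open>\<delta> > 0\<close> a0_pos x by simp
      show "(\<delta> * a0 * x n / 4)^2 \<le> (\<delta>*y/2)^2"
        using y(2) \<open>\<delta> > 0\<close> a0_pos x by (intro power_mono) auto
    qed
    also have "\<dots> = 16 * C / (\<delta> * a0)^2 * (real n * Fbar (x n))"
      using x by (simp add: power2_eq_square field_simps)
    finally show ?case
      using Fbar_nonneg by (simp add: y_def mult_left_mono)
  qed
qed

lemma big_jump_bound_over_Q_tendsto:
  assumes "\<delta> > 0"
  shows "(\<lambda>n. (real n * (Fbar (a n * x n) - Fbar ((1+\<delta>) * (a n * x n)))
      + real n * Fbar ((1+\<delta>) * (a n * x n)) * (K * (real n * Fbar (x n)))) / Q n) \<longlonglongrightarrow> \<delta>/(1+\<delta>)"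
proof -
  have "(\<lambda>n. real n * Fbar (1 * (a n * x n)) / Q n - real n * Fbar ((1+\<delta>) * (a n * x n)) / Q n
      + real n * Fbar ((1+\<delta>) * (a n * x n)) / Q n * (K * (real n * Fbar (x n))))
      \<longlonglongrightarrow> 1/1 - 1/(1+\<delta>) + 1/(1+\<delta>) * (K * 0)"
    using assms by (intro tendsto_intros n_Fbar_over_Q_tendsto n_Fbar_x_tendsto_0) auto
  moreover have "1/1 - 1/(1+\<delta>) + 1/(1+\<delta>) * (K * 0) = \<delta>/(1+\<delta>)"
    using assms by (simp add: field_simps)
  ultimately show ?thesis
    by (simp add: add_divide_distrib diff_divide_distrib right_diff_distrib)
qed

lemma prob_big_jump_diff_large_dev_over_Q_tendsto_0:
  "(\<lambda>n. prob (big_jump n (a n * x n) - large_dev n (x n) (a n * x n)) / Q n) \<longlonglongrightarrow> 0"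
proof (rule tendsto_zero_if_eventually_less)
  show "\<forall>\<^sub>F n in sequentially. 0 \<le> prob (big_jump n (a n * x n) - large_dev n (x n) (a n * x n)) / Q n"
    using eventually_ge_at_top[of 1] by eventually_elim (use Q_pos in \<open>simp add: less_imp_le\<close>)
next
  fix \<epsilon> :: real assume \<epsilon>: "\<epsilon> > 0"
  obtain C where C: "C > 0" "\<forall>\<^sub>F w in at_top. trunc_moment2 w \<le> C * w^2 * Fbar w"
    using trunc_moment2_bigo by blast
  have "\<epsilon>/(1+\<epsilon>) < \<epsilon>"
    using \<epsilon> by (simp add: field_simps)
  with big_jump_bound_over_Q_tendsto[OF \<epsilon>] have "\<forall>\<^sub>F n in sequentially.
      (real n * (Fbar (a n * x n) - Fbar ((1+\<epsilon>) * (a n * x n)))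
      + real n * Fbar ((1+\<epsilon>) * (a n * x n)) * (16 * C / (\<epsilon> * a0)^2 * (real n * Fbar (x n)))) / Q n < \<epsilon>"
    by (rule order_tendstoD(2))
  then show "\<forall>\<^sub>F n in sequentially. prob (big_jump n (a n * x n) - large_dev n (x n) (a n * x n)) / Q n < \<epsilon>"
    using eventually_prob_big_jump_diff_large_dev_le[OF C(2) less_imp_le[OF C(1)] \<epsilon>] eventually_ge_at_top[of 1]
  proof eventually_elim
    case (elim n)
    show ?case
      using le_less_trans[OF divide_right_mono[OF elim(2) less_imp_le[OF Q_pos[OF elim(3)]]] elim(1)] .
  qed
qed

lemma scaled_y_tendsto_at_top: "r > 0 \<Longrightarrow> filterlim (\<lambda>n. r * (a n * x n)) at_top sequentially"
  using filterlim_tendsto_pos_mult_at_top[OF tendsto_mult[OF tendsto_const a_lim] _ x_tendsto_at_top] a0_pos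
  by (simp add: mult.assoc)

lemma eventually_prob_large_dev_diff_big_jump_le:
  assumes m2: "\<forall>\<^sub>F w in at_top. trunc_moment2 w \<le> C * w^2 * Fbar w" and "C \<ge> 0"
    and \<delta>: "0 < \<delta>" "\<delta> < 1" and \<eta>: "0 < \<eta>" "\<eta> \<le> 1/(2*a0)"
  shows "\<forall>\<^sub>F n in sequentially.
    prob (large_dev n (x n) (a n * x n) - big_jump n (a n * x n))
    \<le> (real n * Fbar (\<eta> * (a n * x n)))^2 + real n * (Fbar ((1-\<delta>) * (a n * x n)) - Fbar (a n * x n))
      + real n * Fbar (\<eta> * (a n * x n)) * (C * \<eta>^2 / \<delta>^2 * (real n * Fbar (\<eta> * (a n * x n))))
      + C * \<eta>^2 * (real n * Fbar (\<eta> * (a n * x n)))"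
proof -
  have "\<forall>\<^sub>F n in sequentially. trunc_moment2 (\<eta> * (a n * x n)) \<le> C * (\<eta> * (a n * x n))^2 * Fbar (\<eta> * (a n * x n))"
    using m2 scaled_y_tendsto_at_top[OF \<eta>(1)] by (rule eventually_compose_filterlim)
  with eventually_a_between show ?thesis
  proof eventually_elim
    case (elim n)
    define y where "y = a n * x n"
    define w where "w = \<eta> * y"
    have y: "y > 0" and w: "w > 0"
      using x_pos[of n] elim a0_pos \<eta> by (auto simp: y_def w_def)
    have "\<eta> * a n \<le> 1/(2*a0) * (2*a0)"
      using elim \<eta> a0_pos by (intro mult_mono) auto
    then have "w \<le> x n"
      using x_pos[of n] a0_pos mult_right_mono[of "\<eta> * a n" 1 "x n"] by (simp add: w_def y_def mult.assoc)
    then have "prob (large_dev n (x n) y - big_jump n y)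
      \<le> (real n * Fbar w)^2 + real n * (Fbar ((1-\<delta>)*y) - Fbar y)
        + real n * Fbar w * (real n * trunc_moment2 w / (\<delta>*y)^2) + real n * trunc_moment2 w / y^2"
      using y w \<delta> by (intro prob_large_dev_diff_big_jump_le) auto
    also have "real n * trunc_moment2 w / (\<delta>*y)^2 \<le> C * \<eta>^2 / \<delta>^2 * (real n * Fbar w)"
    proof -
      have "real n * trunc_moment2 w / (\<delta>*y)^2 \<le> real n * (C * w^2 * Fbar w) / (\<delta>*y)^2"
        using elim(2) by (intro divide_right_mono mult_left_mono) (auto simp: w_def y_def)
      also have "\<dots> = C * \<eta>^2 / \<delta>^2 * (real n * Fbar w)"
        using y \<delta> by (simp add: w_def power2_eq_square field_simps)
      finally show ?thesis .
    qed
    also have "real n * trunc_moment2 w / y^2 \<le> C * \<eta>^2 * (real n * Fbar w)"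
    proof -
      have "real n * trunc_moment2 w / y^2 \<le> real n * (C * w^2 * Fbar w) / y^2"
        using elim(2) by (intro divide_right_mono mult_left_mono) (auto simp: w_def y_def)
      also have "\<dots> = C * \<eta>^2 * (real n * Fbar w)"
        using y by (simp add: w_def power2_eq_square field_simps)
      finally show ?thesis .
    qed
    finally show ?case
      using Fbar_nonneg[of w] by (simp add: y_def w_def mult_left_mono)
  qed
qed

lemma large_dev_bound_over_Q_tendsto:
  assumes "0 < \<delta>" "\<delta> < 1" "\<eta> > 0"
  defines "W n \<equiv> real n * Fbar (\<eta> * (a n * x n))"
  shows "(\<lambda>n. ((W n)^2 + real n * (Fbar ((1-\<delta>) * (a n * x n)) - Fbar (a n * x n))
      + W n * (K * W n) + L * W n) / Q n) \<longlonglongrightarrow> \<delta>/(1-\<delta>) + L/\<eta>"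
proof -
  have "(\<lambda>n. W n * (W n / Q n) + (real n * Fbar ((1-\<delta>) * (a n * x n)) / Q n - real n * Fbar (1 * (a n * x n)) / Q n)
      + W n / Q n * (K * W n) + L * (W n / Q n))
      \<longlonglongrightarrow> 0 * (1/\<eta>) + (1/(1-\<delta>) - 1/1) + 1/\<eta> * (K * 0) + L * (1/\<eta>)"
    unfolding W_def using assms by (intro tendsto_intros n_Fbar_over_Q_tendsto n_Fbar_tendsto_0) auto
  moreover have "0 * (1/\<eta>) + (1/(1-\<delta>) - 1/1) + 1/\<eta> * (K * 0) + L * (1/\<eta>) = \<delta>/(1-\<delta>) + L/\<eta>"
    using assms by (simp add: field_simps)
  ultimately show ?thesis
    by (simp add: add_divide_distrib diff_divide_distrib right_diff_distrib power2_eq_square)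
qed

lemma prob_large_dev_diff_big_jump_over_Q_tendsto_0:
  "(\<lambda>n. prob (large_dev n (x n) (a n * x n) - big_jump n (a n * x n)) / Q n) \<longlonglongrightarrow> 0"
proof (rule tendsto_zero_if_eventually_less)
  show "\<forall>\<^sub>F n in sequentially. 0 \<le> prob (large_dev n (x n) (a n * x n) - big_jump n (a n * x n)) / Q n"
    using eventually_ge_at_top[of 1] by eventually_elim (use Q_pos in \<open>simp add: less_imp_le\<close>)
next
  fix \<epsilon> :: real assume \<epsilon>: "\<epsilon> > 0"
  obtain C where C: "C > 0" "\<forall>\<^sub>F w in at_top. trunc_moment2 w \<le> C * w^2 * Fbar w"
    using trunc_moment2_bigo by blast
  define \<delta> where "\<delta> = min (1/2) (\<epsilon>/4)"
  define \<eta> where "\<eta> = min (1/(2*a0)) (\<epsilon>/(4*C))"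
  have \<delta>: "0 < \<delta>" "\<delta> < 1" and \<eta>: "0 < \<eta>" "\<eta> \<le> 1/(2*a0)"
    using \<epsilon> C a0_pos by (auto simp: \<delta>_def \<eta>_def)
  have "\<delta>/(1-\<delta>) \<le> \<delta>/(1/2)"
    using \<epsilon> by (intro divide_left_mono) (auto simp: \<delta>_def)
  moreover have "C * \<eta>^2 / \<eta> = C * \<eta>"
    using \<eta> by (simp add: power2_eq_square)
  moreover have "C * \<eta> \<le> C * (\<epsilon>/(4*C))"
    using C(1) by (intro mult_left_mono) (auto simp: \<eta>_def)
  moreover have "C * (\<epsilon>/(4*C)) = \<epsilon>/4"
    using C(1) by simp
  ultimately have "\<delta>/(1-\<delta>) + C * \<eta>^2 / \<eta> < \<epsilon>"
    using \<epsilon> by (simp add: \<delta>_def)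
  with large_dev_bound_over_Q_tendsto[OF \<delta> \<eta>(1)] have "\<forall>\<^sub>F n in sequentially.
      ((real n * Fbar (\<eta> * (a n * x n)))^2 + real n * (Fbar ((1-\<delta>) * (a n * x n)) - Fbar (a n * x n))
      + real n * Fbar (\<eta> * (a n * x n)) * (C * \<eta>^2 / \<delta>^2 * (real n * Fbar (\<eta> * (a n * x n))))
      + C * \<eta>^2 * (real n * Fbar (\<eta> * (a n * x n)))) / Q n < \<epsilon>"
    by (rule order_tendstoD(2))
  then show "\<forall>\<^sub>F n in sequentially. prob (large_dev n (x n) (a n * x n) - big_jump n (a n * x n)) / Q n < \<epsilon>"
    using eventually_prob_large_dev_diff_big_jump_le[OF C(2) less_imp_le[OF C(1)] \<delta> \<eta>] eventually_ge_at_top[of 1]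
  proof eventually_elim
    case (elim n)
    show ?case
      using le_less_trans[OF divide_right_mono[OF elim(2) less_imp_le[OF Q_pos[OF elim(3)]]] elim(1)] .
  qed
qed

theorem one_big_jump_asymptotics:
  defines "y n \<equiv> a n * x n"
  shows "(\<lambda>n. prob (large_dev n (x n) (y n))) \<sim>[sequentially] Q"
    and "(\<lambda>n. prob (large_dev n (x n) (y n) \<inter> big_jump n (y n))) \<sim>[sequentially] Q"
    and "(\<lambda>n. prob (big_jump n (y n))) \<sim>[sequentially] Q"
proof -
  have jump: "(\<lambda>n. prob (big_jump n (y n)) / Q n) \<longlonglongrightarrow> 1"
    unfolding y_def by (rule prob_big_jump_over_Q_tendsto)
  have "prob (large_dev n (x n) (y n) \<inter> big_jump n (y n))
      = prob (big_jump n (y n)) - prob (big_jump n (y n) - large_dev n (x n) (y n))" for n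
    by (subst finite_measure_Diff') (auto simp: Int_commute)
  then have both: "(\<lambda>n. prob (large_dev n (x n) (y n) \<inter> big_jump n (y n)) / Q n) \<longlonglongrightarrow> 1 - 0"
    using tendsto_diff[OF jump prob_big_jump_diff_large_dev_over_Q_tendsto_0]
    by (simp add: y_def diff_divide_distrib)
  have "prob (large_dev n (x n) (y n))
      = prob (large_dev n (x n) (y n) \<inter> big_jump n (y n)) + prob (large_dev n (x n) (y n) - big_jump n (y n))" for n
    by (subst finite_measure_Diff') auto
  then have "(\<lambda>n. prob (large_dev n (x n) (y n)) / Q n) \<longlonglongrightarrow> 1 + 0"
    using tendsto_add[OF both prob_large_dev_diff_big_jump_over_Q_tendsto_0]
    by (simp add: y_def add_divide_distrib)
  with both jump show "(\<lambda>n. prob (large_dev n (x n) (y n))) \<sim>[sequentially] Q"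
    and "(\<lambda>n. prob (large_dev n (x n) (y n) \<inter> big_jump n (y n))) \<sim>[sequentially] Q"
    and "(\<lambda>n. prob (big_jump n (y n))) \<sim>[sequentially] Q"
    by (auto intro: asymp_equivI')
qed

corollary one_big_jump_asymptotics_Max:
  defines "y n \<equiv> a n * x n"
    and "S n \<omega> \<equiv> \<Sum>i\<in>{1..n}. \<xi> i \<omega>" and "Mx n \<omega> \<equiv> Max ((\<lambda>i. \<xi> i \<omega>) ` {1..n})"
  defines "P1 n \<equiv> prob {\<omega> \<in> space M. S n \<omega> - real n * G (x n) \<ge> y n}"
    and "P2 n \<equiv> prob {\<omega> \<in> space M. S n \<omega> - real n * G (x n) \<ge> y n \<and> Mx n \<omega> \<ge> y n}"
    and "P3 n \<equiv> prob {\<omega> \<in> space M. Mx n \<omega> \<ge> y n}"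
  shows "P1 \<sim>[sequentially] P2 \<and> P2 \<sim>[sequentially] P3 \<and> P3 \<sim>[sequentially] Q \<and> Q \<longlonglongrightarrow> 0"
proof -
  \<comment> \<open>For n = 0 the maximum of the empty set is unspecified, so the events agree only eventually.\<close>
  have Max_ge: "Mx n \<omega> \<ge> t \<longleftrightarrow> (\<exists>i\<in>{1..n}. \<xi> i \<omega> \<ge> t)" if "n \<ge> 1" for n \<omega> t
    using that by (simp add: Mx_def Max_ge_iff)
  have "\<forall>\<^sub>F n in sequentially. P2 n = prob (large_dev n (x n) (y n) \<inter> big_jump n (y n))
      \<and> P3 n = prob (big_jump n (y n))"
    using eventually_ge_at_top[of 1]
    by eventually_elim (auto simp: P2_def P3_def Max_ge large_dev_def big_jump_def S_def intro!: arg_cong[where f=prob])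
  then have "P2 \<sim>[sequentially] Q \<longleftrightarrow> (\<lambda>n. prob (large_dev n (x n) (y n) \<inter> big_jump n (y n))) \<sim>[sequentially] Q"
    and "P3 \<sim>[sequentially] Q \<longleftrightarrow> (\<lambda>n. prob (big_jump n (y n))) \<sim>[sequentially] Q"
    by (auto intro!: asymp_equiv_cong elim: eventually_mono)
  moreover have "P1 = (\<lambda>n. prob (large_dev n (x n) (y n)))"
    by (simp add: fun_eq_iff P1_def large_dev_def S_def)
  ultimately have "P1 \<sim>[sequentially] Q" "P2 \<sim>[sequentially] Q" "P3 \<sim>[sequentially] Q"
    using one_big_jump_asymptotics[folded y_def] by simp_all
  then show ?thesis
    using Q_tendsto_0 by (blast intro: asymp_equiv_trans asymp_equiv_symI)
qed

end

(* The theorem constrains xi only at indices i >= 1; redefining xi 0 as 0 makes every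
   xi i measurable, as the locale demands, without changing any sum or maximum over {1..n}. *)
lemma (in prob_space) iid_nonneg_zero_extension:
  fixes \<xi> :: "nat \<Rightarrow> 'a \<Rightarrow> real"
  assumes rv: "\<And>i. i \<ge> 1 \<Longrightarrow> \<xi> i \<in> borel_measurable M"
    and indep: "indep_vars (\<lambda>_. borel) \<xi> {1..}"
    and ident: "\<And>i. i \<ge> 1 \<Longrightarrow> distr M borel (\<xi> i) = distr M borel (\<xi> 1)"
    and nonneg: "\<And>i \<omega>. i \<ge> 1 \<Longrightarrow> \<omega> \<in> space M \<Longrightarrow> \<xi> i \<omega> \<ge> 0"
  shows "iid_nonneg M (\<lambda>i. if i = 0 then (\<lambda>_. 0) else \<xi> i)"
proof
  show "(if i = 0 then (\<lambda>_. 0) else \<xi> i) \<in> borel_measurable M" for i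
    using rv[of i] by simp
  show "indep_vars (\<lambda>_. borel) (\<lambda>i. if i = 0 then (\<lambda>_. 0) else \<xi> i) {1..}"
    using indep by (rule indep_vars_cong[THEN iffD1, rotated 3]) auto
  show "distr M borel (if i = 0 then (\<lambda>_. 0) else \<xi> i)
      = distr M borel (if (1::nat) = 0 then (\<lambda>_. 0) else \<xi> 1)" if "i \<ge> 1" for i
    using ident[OF that] that by simp
  show "(if i = 0 then (\<lambda>_. 0) else \<xi> i) \<omega> \<ge> 0" if "i \<ge> 1" "\<omega> \<in> space M" for i \<omega>
    using nonneg[OF that] that by simp
qed

theorem proposition1:
  fixes M :: "'a measure" and \<xi> :: "nat \<Rightarrow> 'a \<Rightarrow> real"
    and x :: "nat \<Rightarrow> real" and a :: "nat \<Rightarrow> real" and a0 :: real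
  assumes "prob_space M"
    and rv: "\<And>i. i \<ge> 1 \<Longrightarrow> \<xi> i \<in> borel_measurable M"
    and indep: "prob_space.indep_vars M (\<lambda>_. borel) \<xi> {1..}"
    and ident: "\<And>i. i \<ge> 1 \<Longrightarrow> distr M borel (\<xi> i) = distr M borel (\<xi> 1)"
    and nonneg: "\<And>i \<omega>. i \<ge> 1 \<Longrightarrow> \<omega> \<in> space M \<Longrightarrow> \<xi> i \<omega> \<ge> 0"
    and tail: "\<exists>l. slowly_varying l \<and>
      (\<forall>\<^sub>F t in at_top. measure M {\<omega> \<in> space M. \<xi> 1 \<omega> \<ge> t} = l t / t)"
    and x_pos: "\<And>n. x n > 0"
    and x_liminf: "liminf (\<lambda>n. ereal (x n / (real n *
        (LBINT t=0..x n. measure M {\<omega> \<in> space M. \<xi> 1 \<omega> \<ge> t})))) > 0"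
    and a_pos: "\<And>n. a n > 0"
    and a_lim: "a \<longlonglongrightarrow> a0" and a0_pos: "a0 > 0"
  shows
   "let Fbar = (\<lambda>t. measure M {\<omega> \<in> space M. \<xi> 1 \<omega> \<ge> t});
        G = (\<lambda>s. LBINT t=0..s. Fbar t);
        S = (\<lambda>n \<omega>. \<Sum>i\<in>{1..n}. \<xi> i \<omega>);
        Mx = (\<lambda>n \<omega>. Max ((\<lambda>i. \<xi> i \<omega>) ` {1..n}));
        P1 = (\<lambda>n. measure M {\<omega> \<in> space M. S n \<omega> - real n * G (x n) \<ge> a n * x n});
        P2 = (\<lambda>n. measure M {\<omega> \<in> space M. S n \<omega> - real n * G (x n) \<ge> a n * x n
                                          \<and> Mx n \<omega> \<ge> a n * x n});
        P3 = (\<lambda>n. measure M {\<omega> \<in> space M. Mx n \<omega> \<ge> a n * x n});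
        Q = (\<lambda>n. real n * Fbar (x n) / a0)
    in P1 \<sim>[sequentially] P2 \<and> P2 \<sim>[sequentially] P3 \<and> P3 \<sim>[sequentially] Q
       \<and> Q \<longlonglongrightarrow> 0"
proof -
  interpret prob_space M by fact
  define \<xi>' where "\<xi>' i = (if i = 0 then (\<lambda>_. 0) else \<xi> i)" for i
  interpret iid_nonneg M \<xi>'
    unfolding \<xi>'_def[abs_def] using rv indep ident nonneg by (rule iid_nonneg_zero_extension)
  have Fbar_eq: "measure M {\<omega> \<in> space M. \<xi> 1 \<omega> \<ge> t} = Fbar t" for t
    by (simp add: Fbar_def \<xi>'_def)
  obtain l where "iid_nonneg_regular_tail M \<xi>' l"
    using tail unfolding Fbar_eq
    by (auto simp: iid_nonneg_regular_tail_def iid_nonneg_regular_tail_axioms_def iid_nonneg_axioms)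
  then interpret iid_nonneg_regular_tail M \<xi>' l .
  obtain c where "c > 0" "\<forall>\<^sub>F n in sequentially. c \<le> x n / (real n * G (x n))"
    using liminf_pos_imp_eventually_ge[OF x_liminf] unfolding Fbar_eq G_def[symmetric] by blast
  then interpret big_jump_regime M \<xi>' l x a a0 c
    using x_pos a_lim a0_pos by unfold_locales auto
  have "(\<Sum>i\<in>{1..n}. \<xi>' i \<omega>) = (\<Sum>i\<in>{1..n}. \<xi> i \<omega>)" "(\<lambda>i. \<xi>' i \<omega>) ` {1..n} = (\<lambda>i. \<xi> i \<omega>) ` {1..n}"
    for n \<omega>
    by (auto simp: \<xi>'_def intro!: sum.cong image_cong)
  with one_big_jump_asymptotics_Max show ?thesis
    unfolding Let_def Fbar_eq G_def[symmetric] Q_def[abs_def] by simp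
qed

end
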